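(* The randomized modified multiplicative price update algorithm is a universally truthful mechanism without money and with verification for CAs with unknown $k$-minded bidders and goods of supply $b$; it always outputs an allocation in which each good is allocated at most $b$ times, and its expected approximation ratio is $O(d^{1/b}\log(bm))$, where $d$ is the maximum cardinality of a demanded set with positive valuation.
   Context: Multi-unit combinatorial auction: a set $\mathsf U$ of $m$ goods, each with supply $b\ge1$; $n$ bidders. True type of bidder $i$: $t_i=(v_i,\mathcal S_i)$ with $\mathcal S_i$ a private collection of $k$ nonempty subsets of $\mathsf U$ and $v_i:\mathcal S_i\to\mathbb R_{\ge0}$ private, extended by $v_i(T)=\max\{v_i(S'):S'\in\mathcal S_i,S'\subseteq T\}$ ($0$ if none). Declarations $(w,\mathcal W)$ have the same form. Randomized modified algorithm on declarations $(w_i,\mathcal W_i)$: let $v^i_{\max}=\max_{S\in\mathcal W_i}w_i(S)$, $j$ the bidder with largest $v^j_{\max}$ (smallest index on ties), $\mu=(1+\epsilon)v^j_{\max}$ for fixed $0<\epsilon\ll1$, $p_0=\mu/(4bm)$, $r=2^{1/b}$, $q=1/(2\mathrm e\, d^{1/b}\log(4bm))$; initially each good $e$ has price $p_e=p_0$ and remaining supply $b_e=b$. Process bidders in order $j,1,\dots,j-1,j+1,\dots,n$; for bidder $i$: let $\mathsf U_i=\{e:b_e>0\}$, let $S_i$ maximize $w_i(S)$ over $S\in\mathcal W_i$ with $S\subseteq\mathsf U_i$ and $w_i(S)\ge\sum_{e\in S}p_e$ ($\emptyset$ if none); multiply $p_e$ by $r$ for $e\in S_i$; set $R_i=S_i$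 if $i=j$, and otherwise $R_i=S_i$ with probability $q$ and $R_i=\emptyset$ with probability $1-q$ (independently); decrease $b_e$ by one for every $e\in R_i$. Output $(R_1,\dots,R_n)$. Verification: bidder $i$ with true type $t_i$ facing $\mathbf b_{-i}$ may declare $b_i=(z,\mathcal T)$ only if $z(A_i(b_i,\mathbf b_{-i}))\le v_i(A_i(b_i,\mathbf b_{-i}))$. A deterministic mechanism is truthful without money and with verification if for all $i$, $\mathbf b_{-i}$, true $t_i$ and permitted $b_i$, $v_i(A_i(t_i,\mathbf b_{-i}))\ge v_i(A_i(b_i,\mathbf b_{-i}))$; a randomized mechanism is universally truthful if it is a probability distribution over such deterministic mechanisms. Expected approximation ratio $\alpha$: on every truthful input, the expected social welfare is at least $\mathrm{OPT}/\alpha$, $\mathrm{OPT}$ being the maximum welfare of an allocation giving each good at most $b$ times. *)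

theory Defs
  imports "HOL-Probability.Probability"
begin

text \<open>Goods and bidders are natural numbers.  A type / declaration is a pair (v, S)
  of a value function and a finite collection of demanded sets.\<close>

type_synonym decl = "(nat set \<Rightarrow> real) \<times> nat set set"

definition valid_type :: "nat set \<Rightarrow> nat \<Rightarrow> decl \<Rightarrow> bool" where
  "valid_type U k t \<longleftrightarrow> finite (snd t) \<and> card (snd t) = k \<and>
     (\<forall>S\<in>snd t. S \<noteq> {} \<and> S \<subseteq> U \<and> 0 \<le> fst t S)"

definition val :: "decl \<Rightarrow> nat set \<Rightarrow> real" where
  "val t T = Max (insert 0 {fst t S' | S'. S' \<in> snd t \<and> S' \<subseteq> T})"

definition vmax :: "decl \<Rightarrow> real" where
  "vmax t = Max (val t ` snd t)"

definition winner :: "nat \<Rightarrow> (nat \<Rightarrow> decl) \<Rightarrow> nat" where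
  "winner n decl = (LEAST j. j < n \<and> (\<forall>i<n. vmax (decl i) \<le> vmax (decl j)))"

definition choose_set :: "decl \<Rightarrow> (nat \<Rightarrow> real) \<Rightarrow> nat set \<Rightarrow> nat set" where
  "choose_set t p Ui =
     (let C = {S \<in> snd t. S \<subseteq> Ui \<and> (\<Sum>e\<in>S. p e) \<le> val t S}
      in if C = {} then {} else (SOME S. S \<in> C \<and> (\<forall>S'\<in>C. val t S' \<le> val t S)))"

text \<open>One step of the algorithm for bidder i; state = (prices, remaining supplies, allocation).
  The coin c i decides whether a non-first bidder receives its chosen set.\<close>
definition mpu_step ::
  "nat set \<Rightarrow> real \<Rightarrow> nat \<Rightarrow> (nat \<Rightarrow> decl) \<Rightarrow> (nat \<Rightarrow> bool) \<Rightarrow> nat \<Rightarrow>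
   (nat \<Rightarrow> real) \<times> (nat \<Rightarrow> nat) \<times> (nat \<Rightarrow> nat set) \<Rightarrow>
   (nat \<Rightarrow> real) \<times> (nat \<Rightarrow> nat) \<times> (nat \<Rightarrow> nat set)" where
  "mpu_step U r j decl c i st =
     (case st of (p, s, R) \<Rightarrow>
       (let Ui = {e \<in> U. 0 < s e};
            Si = choose_set (decl i) p Ui;
            Ri = (if i = j \<or> c i then Si else {})
        in (\<lambda>e. if e \<in> Si then r * p e else p e,
            \<lambda>e. if e \<in> Ri then s e - 1 else s e,
            R(i := Ri))))"

text \<open>The deterministic mechanism obtained by fixing the coin outcomes c
  (c i = True: bidder i's tentative set is accepted; probability q each, independently).\<close>
definition mpu_alloc ::
  "nat set \<Rightarrow> nat \<Rightarrow> nat \<Rightarrow> real \<Rightarrow> (nat \<Rightarrow> decl) \<Rightarrow> (nat \<Rightarrow> bool) \<Rightarrow> nat \<Rightarrow> nat set" where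
  "mpu_alloc U n b eps decl c =
     (let m = card U;
          j = winner n decl;
          mu = (1 + eps) * vmax (decl j);
          p0 = mu / (4 * real b * real m);
          r = 2 powr (1 / real b);
          ord = j # filter (\<lambda>i. i \<noteq> j) [0..<n]
      in snd (snd (fold (mpu_step U r j decl c) ord (\<lambda>_. p0, \<lambda>_. b, \<lambda>_. {}))))"

definition qprob :: "nat \<Rightarrow> nat \<Rightarrow> nat \<Rightarrow> real" where
  "qprob b m d = 1 / (2 * exp 1 * real d powr (1 / real b) * log 2 (real (4 * b * m)))"

definition coins :: "nat \<Rightarrow> nat \<Rightarrow> nat \<Rightarrow> nat \<Rightarrow> (nat \<Rightarrow> bool) pmf" where
  "coins n b m d = Pi_pmf {..<n} False (\<lambda>_. bernoulli_pmf (qprob b m d))"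

definition welfare :: "nat \<Rightarrow> (nat \<Rightarrow> decl) \<Rightarrow> (nat \<Rightarrow> nat set) \<Rightarrow> real" where
  "welfare n t A = (\<Sum>i<n. val (t i) (A i))"

definition feasible :: "nat set \<Rightarrow> nat \<Rightarrow> nat \<Rightarrow> (nat \<Rightarrow> nat set) \<Rightarrow> bool" where
  "feasible U n b A \<longleftrightarrow> (\<forall>i<n. A i \<subseteq> U) \<and> (\<forall>e\<in>U. card {i \<in> {..<n}. e \<in> A i} \<le> b)"

definition OPT :: "nat set \<Rightarrow> nat \<Rightarrow> nat \<Rightarrow> (nat \<Rightarrow> decl) \<Rightarrow> real" where
  "OPT U n b t = Max (welfare n t ` {A. A \<in> {..<n} \<rightarrow>\<^sub>E Pow U \<and> feasible U n b A})"

definition truthful_verif ::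
  "nat set \<Rightarrow> nat \<Rightarrow> nat \<Rightarrow> ((nat \<Rightarrow> decl) \<Rightarrow> nat \<Rightarrow> nat set) \<Rightarrow> bool" where
  "truthful_verif U n k M \<longleftrightarrow>
     (\<forall>decl i t bi. (\<forall>l<n. valid_type U k (decl l)) \<longrightarrow> i < n \<longrightarrow>
        valid_type U k t \<longrightarrow> valid_type U k bi \<longrightarrow>
        val bi (M (decl(i := bi)) i) \<le> val t (M (decl(i := bi)) i) \<longrightarrow>
        val t (M (decl(i := bi)) i) \<le> val t (M (decl(i := t)) i))"

end

theory Submission
  imports Defs
begin

text \<open>When bidder i is processed, prices and remaining supplies depend only on the bidders
  before it, so a misreport can only change which affordable set i receives; by verification
  its true value is at least its declared value, hence at least its price, so it contains an
  affordable demanded set of the true type, which the truthful choice dominates. A bidder that is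
  first when truthful gets its maximum value, and one that becomes first only by lying would have
  to overstate that maximum, which verification forbids. Feasibility holds because a supply is decremented exactly when the good is
  allocated.

  For the ratio, charge the value of each bidder's optimal set T at its turn to its own tentative
  set (if T is affordable), to the current prices of T (if T is too expensive), or to T itself (if
  one of its goods is exhausted). A tentative set costs at most its value and raises the price of
  its goods by the factor r = 2^(1/b), so the total price stays below the initial one plus
  (r - 1) \<le> 1/b times the tentative welfare. Tentative sets are accepted independently with
  probability q, so the expected welfare is at least q times the expected tentative welfare.
  After K = \<lceil>b log(4bm)\<rceil> picks a good costs more than any value, so it is exhausted only if b of
  at most K picks are accepted, which has probability at most C(K,b) q^b, and q is chosen so
  that d C(K,b) q^b \<le> 3/4.\<close>


section \<open>Supermartingales driven by independent coins\<close>

lemma expectation_Pi_bernoulli_fold_Cons: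
  fixes g :: "nat \<Rightarrow> bool \<Rightarrow> 'a \<Rightarrow> 'a" and \<Phi> :: "'a \<Rightarrow> real"
  assumes A: "finite A" "i \<notin> A" and L: "i \<notin> set L" and q: "0 \<le> q" "q \<le> 1"
  shows "measure_pmf.expectation (Pi_pmf (insert i A) False (\<lambda>_. bernoulli_pmf q))
           (\<lambda>c. \<Phi> (fold (\<lambda>k. g k (c k)) (i # L) st))
       = q * measure_pmf.expectation (Pi_pmf A False (\<lambda>_. bernoulli_pmf q))
               (\<lambda>c. \<Phi> (fold (\<lambda>k. g k (c k)) L (g i True st)))
       + (1 - q) * measure_pmf.expectation (Pi_pmf A False (\<lambda>_. bernoulli_pmf q))
               (\<lambda>c. \<Phi> (fold (\<lambda>k. g k (c k)) L (g i False st)))"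
proof -
  have fin: "finite (set_pmf (Pi_pmf A False (\<lambda>_. bernoulli_pmf q)))"
    using A(1) by (auto simp: set_Pi_pmf intro!: finite_PiE_dflt)
  have coin_irrelevant:
    "fold (\<lambda>k. g k (if k = i then y else f k)) L st' = fold (\<lambda>k. g k (f k)) L st'" for f y st'
    using L by (intro fold_cong) auto
  have "measure_pmf.expectation (Pi_pmf (insert i A) False (\<lambda>_. bernoulli_pmf q))
          (\<lambda>c. \<Phi> (fold (\<lambda>k. g k (c k)) (i # L) st))
      = measure_pmf.expectation
          (bernoulli_pmf q \<bind> (\<lambda>y. map_pmf (\<lambda>f. f(i := y)) (Pi_pmf A False (\<lambda>_. bernoulli_pmf q))))
          (\<lambda>c. \<Phi> (fold (\<lambda>k. g k (c k)) (i # L) st))"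
    unfolding Pi_pmf_insert'[OF A] map_pmf_def by simp
  also have "\<dots> = (\<Sum>y\<in>UNIV. pmf (bernoulli_pmf q) y *
        measure_pmf.expectation (Pi_pmf A False (\<lambda>_. bernoulli_pmf q))
          (\<lambda>c. \<Phi> (fold (\<lambda>k. g k (c k)) L (g i y st))))"
    by (subst pmf_expectation_bind[of UNIV]) (use fin in \<open>auto simp: coin_irrelevant\<close>)
  finally show ?thesis
    using q by (simp add: UNIV_bool)
qed

text \<open>Inv B st says that the bidders in B are still to come; it lets the one-step
  supermartingale inequality depend on the position in the list.\<close>

lemma expectation_Pi_bernoulli_fold_le:
  fixes g :: "nat \<Rightarrow> bool \<Rightarrow> 'a \<Rightarrow> 'a" and \<Phi> :: "'a \<Rightarrow> real" and Inv :: "nat set \<Rightarrow> 'a \<Rightarrow> bool"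
  assumes inv: "\<And>i y st B. i \<in> B \<Longrightarrow> Inv B st \<Longrightarrow> Inv (B - {i}) (g i y st)"
    and step: "\<And>i st B. i \<in> B \<Longrightarrow> Inv B st \<Longrightarrow>
                 q * \<Phi> (g i True st) + (1 - q) * \<Phi> (g i False st) \<le> \<Phi> st"
    and q: "0 \<le> q" "q \<le> 1"
    and L: "distinct L" "set L \<subseteq> A" "finite A"
    and st: "Inv (set L) st"
  shows "measure_pmf.expectation (Pi_pmf A False (\<lambda>_. bernoulli_pmf q))
           (\<lambda>c. \<Phi> (fold (\<lambda>i. g i (c i)) L st)) \<le> \<Phi> st"
  using L st
proof (induction L arbitrary: A st)
  case Nil
  then show ?case by simp
next
  case (Cons i L)
  define A' where "A' = A - {i}"
  have A': "A = insert i A'" "finite A'" "i \<notin> A'" "set L \<subseteq> A'"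
    using Cons.prems unfolding A'_def by auto
  have IH: "measure_pmf.expectation (Pi_pmf A' False (\<lambda>_. bernoulli_pmf q))
              (\<lambda>c. \<Phi> (fold (\<lambda>k. g k (c k)) L (g i y st))) \<le> \<Phi> (g i y st)" for y
  proof -
    have "set (i # L) - {i} = set L" using Cons.prems(1) by auto
    then have "Inv (set L) (g i y st)" using inv[of i "set (i # L)" st y] Cons.prems(4) by auto
    then show ?thesis using Cons.IH[of A' "g i y st"] Cons.prems(1) A' by auto
  qed
  have "measure_pmf.expectation (Pi_pmf A False (\<lambda>_. bernoulli_pmf q))
          (\<lambda>c. \<Phi> (fold (\<lambda>k. g k (c k)) (i # L) st))
      = q * measure_pmf.expectation (Pi_pmf A' False (\<lambda>_. bernoulli_pmf q))
              (\<lambda>c. \<Phi> (fold (\<lambda>k. g k (c k)) L (g i True st)))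
      + (1 - q) * measure_pmf.expectation (Pi_pmf A' False (\<lambda>_. bernoulli_pmf q))
              (\<lambda>c. \<Phi> (fold (\<lambda>k. g k (c k)) L (g i False st)))"
    unfolding A'(1) using A'(2,3) Cons.prems(1) q by (intro expectation_Pi_bernoulli_fold_Cons) auto
  also have "\<dots> \<le> q * \<Phi> (g i True st) + (1 - q) * \<Phi> (g i False st)"
    using IH q by (intro add_mono mult_left_mono) auto
  also have "\<dots> \<le> \<Phi> st" using Cons.prems step[of i "set (i # L)" st] by auto
  finally show ?case .
qed


section \<open>Extended valuations and the choice rule\<close>

lemma val_altdef: "val t T = Max (insert 0 (fst t ` {S' \<in> snd t. S' \<subseteq> T}))"
proof -
  have "{fst t S' | S'. S' \<in> snd t \<and> S' \<subseteq> T} = fst t ` {S' \<in> snd t. S' \<subseteq> T}" by auto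
  then show ?thesis unfolding val_def by simp
qed

lemma val_nonneg: "finite (snd t) \<Longrightarrow> 0 \<le> val t T"
  unfolding val_altdef by (intro Max_ge) auto

lemma val_ge_demanded: "finite (snd t) \<Longrightarrow> S' \<in> snd t \<Longrightarrow> S' \<subseteq> T \<Longrightarrow> fst t S' \<le> val t T"
  unfolding val_altdef by (intro Max_ge) auto

lemma value_le_val: "finite (snd t) \<Longrightarrow> S \<in> snd t \<Longrightarrow> fst t S \<le> val t S"
  using val_ge_demanded by blast

lemma val_cases: "finite (snd t) \<Longrightarrow> val t T = 0 \<or> (\<exists>S'\<in>snd t. S' \<subseteq> T \<and> val t T = fst t S')"
proof -
  assume "finite (snd t)"
  then have "val t T \<in> insert 0 (fst t ` {S' \<in> snd t. S' \<subseteq> T})"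
    unfolding val_altdef by (intro Max_in) auto
  then show ?thesis by auto
qed

lemma val_pos_attained: "finite (snd t) \<Longrightarrow> 0 < val t T \<Longrightarrow> \<exists>S'\<in>snd t. S' \<subseteq> T \<and> val t T = fst t S'"
  using val_cases[of t T] by auto

lemma valid_type_finite: "valid_type U k t \<Longrightarrow> finite (snd t)"
  unfolding valid_type_def by auto

lemma valid_type_nonempty: "valid_type U k t \<Longrightarrow> 1 \<le> k \<Longrightarrow> snd t \<noteq> {}"
  unfolding valid_type_def by auto

lemma val_empty: "valid_type U k t \<Longrightarrow> val t {} = 0"
  using val_cases[of t "{}"] unfolding valid_type_def by auto

lemma vmax_attained: "finite (snd t) \<Longrightarrow> snd t \<noteq> {} \<Longrightarrow> \<exists>S\<in>snd t. val t S = vmax t"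
proof -
  assume "finite (snd t)" "snd t \<noteq> {}"
  then have "vmax t \<in> val t ` snd t" unfolding vmax_def by (intro Max_in) auto
  then show ?thesis by auto
qed

lemma val_le_vmax:
  assumes f: "finite (snd t)" and ne: "snd t \<noteq> {}"
  shows "val t T \<le> vmax t"
proof (cases "val t T = 0")
  case True
  obtain S0 where "S0 \<in> snd t" using ne by auto
  then have "val t S0 \<le> vmax t" unfolding vmax_def using f by (intro Max_ge) auto
  then show ?thesis using True val_nonneg[OF f, of S0] by auto
next
  case False
  then obtain S' where S': "S' \<in> snd t" "val t T = fst t S'" using val_cases[OF f, of T] by auto
  then have "val t S' \<le> vmax t" unfolding vmax_def using f by (intro Max_ge) auto
  then show ?thesis using S' value_le_val[OF f S'(1)] by linarith
qed

lemma vmax_nonneg: "finite (snd t) \<Longrightarrow> snd t \<noteq> {} \<Longrightarrow> 0 \<le> vmax t"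
  using val_le_vmax val_nonneg order_trans by blast

lemma winner_maximal:
  assumes "1 \<le> n"
  shows "winner n D < n \<and> (\<forall>i<n. vmax (D i) \<le> vmax (D (winner n D)))"
proof -
  have "0 \<in> {..<n}" using assms by auto
  then have "finite (vmax ` D ` {..<n})" "vmax ` D ` {..<n} \<noteq> {}" by auto
  then have "Max (vmax ` D ` {..<n}) \<in> vmax ` D ` {..<n}" by (rule Max_in)
  then obtain j where j: "j < n" "vmax (D j) = Max (vmax ` D ` {..<n})" by auto
  then have "\<exists>j. j < n \<and> (\<forall>i<n. vmax (D i) \<le> vmax (D j))" by auto
  then show ?thesis unfolding winner_def by (rule LeastI_ex)
qed

lemma winner_le: "l < n \<Longrightarrow> \<forall>i<n. vmax (D i) \<le> vmax (D l) \<Longrightarrow> winner n D \<le> l"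
  unfolding winner_def by (rule Least_le) auto

lemma choose_set_spec:
  assumes f: "finite (snd t)"
  shows "choose_set t p Ui \<subseteq> Ui"
    and "choose_set t p Ui = {} \<or>
           (choose_set t p Ui \<in> snd t \<and> sum p (choose_set t p Ui) \<le> val t (choose_set t p Ui))"
    and "\<And>S'. S' \<in> snd t \<Longrightarrow> S' \<subseteq> Ui \<Longrightarrow> sum p S' \<le> val t S' \<Longrightarrow> val t S' \<le> val t (choose_set t p Ui)"
proof -
  define C where "C = {S \<in> snd t. S \<subseteq> Ui \<and> (\<Sum>e\<in>S. p e) \<le> val t S}"
  define X where "X = choose_set t p Ui"
  have X: "X = (if C = {} then {} else (SOME S. S \<in> C \<and> (\<forall>S'\<in>C. val t S' \<le> val t S)))"
    unfolding X_def choose_set_def C_def Let_def by simp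
  have best: "X \<in> C \<and> (\<forall>S'\<in>C. val t S' \<le> val t X)" if ne: "C \<noteq> {}"
  proof -
    have "finite C" using f unfolding C_def by auto
    then have "Max (val t ` C) \<in> val t ` C" using ne by (intro Max_in) auto
    then obtain S where "S \<in> C" "val t S = Max (val t ` C)" by auto
    then have "\<exists>S. S \<in> C \<and> (\<forall>S'\<in>C. val t S' \<le> val t S)" using \<open>finite C\<close> by auto
    from someI_ex[OF this] show ?thesis using X ne by simp
  qed
  have memC: "S \<in> snd t \<and> S \<subseteq> Ui \<and> sum p S \<le> val t S" if "S \<in> C" for S
    using that unfolding C_def by auto
  show "choose_set t p Ui \<subseteq> Ui"
    using X best memC unfolding X_def by (cases "C = {}") auto
  show "choose_set t p Ui = {} \<or>
          (choose_set t p Ui \<in> snd t \<and> sum p (choose_set t p Ui) \<le> val t (choose_set t p Ui))"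
    using X best memC unfolding X_def by (cases "C = {}") auto
  fix S' assume "S' \<in> snd t" "S' \<subseteq> Ui" "sum p S' \<le> val t S'"
  then have "S' \<in> C" unfolding C_def by auto
  then show "val t S' \<le> val t (choose_set t p Ui)" using best unfolding X_def by auto
qed

lemma choose_set_affordable:
  "finite (snd t) \<Longrightarrow> sum p (choose_set t p Ui) \<le> val t (choose_set t p Ui)"
  using choose_set_spec(2)[of t p Ui] val_nonneg[of t "{}"] by auto


section \<open>The algorithm as a fold over states\<close>

text \<open>Besides the three components of mpu_step, a state records each bidder's tentative set
  S_i and how often each good has been tentatively picked; both are needed only in the analysis.\<close>

record mpu_state =
  price :: "nat \<Rightarrow> real"
  remaining :: "nat \<Rightarrow> nat"
  alloc :: "nat \<Rightarrow> nat set"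
  tentative :: "nat \<Rightarrow> nat set"
  picks :: "nat \<Rightarrow> nat"

definition chosen :: "nat set \<Rightarrow> (nat \<Rightarrow> decl) \<Rightarrow> nat \<Rightarrow> mpu_state \<Rightarrow> nat set" where
  "chosen U D i st = choose_set (D i) (price st) {e \<in> U. 0 < remaining st e}"

definition state_step ::
  "nat set \<Rightarrow> real \<Rightarrow> nat \<Rightarrow> (nat \<Rightarrow> decl) \<Rightarrow> bool \<Rightarrow> nat \<Rightarrow> mpu_state \<Rightarrow> mpu_state" where
  "state_step U r j D y i st =
    (let S = chosen U D i st; R = (if i = j \<or> y then S else {}) in
     \<lparr>price = \<lambda>e. if e \<in> S then r * price st e else price st e,
      remaining = \<lambda>e. if e \<in> R then remaining st e - 1 else remaining st e,
      alloc = (alloc st)(i := R),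
      tentative = (tentative st)(i := S),
      picks = \<lambda>e. if e \<in> S then Suc (picks st e) else picks st e\<rparr>)"

lemma state_step_sel:
  "price (state_step U r j D y i st) = (\<lambda>e. if e \<in> chosen U D i st then r * price st e else price st e)"
  "remaining (state_step U r j D y i st) =
     (\<lambda>e. if e \<in> (if i = j \<or> y then chosen U D i st else {}) then remaining st e - 1 else remaining st e)"
  "alloc (state_step U r j D y i st) = (alloc st)(i := (if i = j \<or> y then chosen U D i st else {}))"
  "tentative (state_step U r j D y i st) = (tentative st)(i := chosen U D i st)"
  "picks (state_step U r j D y i st) = (\<lambda>e. if e \<in> chosen U D i st then Suc (picks st e) else picks st e)"
  unfolding state_step_def Let_def by simp_all

definition mpu_run ::
  "nat set \<Rightarrow> real \<Rightarrow> nat \<Rightarrow> (nat \<Rightarrow> decl) \<Rightarrow> (nat \<Rightarrow> bool) \<Rightarrow> nat list \<Rightarrow> mpu_state \<Rightarrow> mpu_state" where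
  "mpu_run U r j D c L st = fold (\<lambda>i. state_step U r j D (c i) i) L st"

lemma mpu_run_Nil [simp]: "mpu_run U r j D c [] st = st"
  unfolding mpu_run_def by simp

lemma mpu_run_Cons [simp]:
  "mpu_run U r j D c (i # L) st = mpu_run U r j D c L (state_step U r j D (c i) i st)"
  unfolding mpu_run_def by simp

lemma mpu_run_append:
  "mpu_run U r j D c (L1 @ L2) st = mpu_run U r j D c L2 (mpu_run U r j D c L1 st)"
  unfolding mpu_run_def by simp

lemma mpu_run_project:
  "(price (mpu_run U r j D c L st), remaining (mpu_run U r j D c L st), alloc (mpu_run U r j D c L st))
   = fold (mpu_step U r j D c) L (price st, remaining st, alloc st)"
proof (induction L arbitrary: st)
  case Nil
  then show ?case by simp
next
  case (Cons i L)
  have "mpu_step U r j D c i (price st, remaining st, alloc st) =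
        (price (state_step U r j D (c i) i st), remaining (state_step U r j D (c i) i st),
         alloc (state_step U r j D (c i) i st))"
    unfolding mpu_step_def state_step_sel chosen_def Let_def by simp
  then show ?case using Cons.IH[of "state_step U r j D (c i) i st"] by simp
qed

lemma mpu_run_cong: "\<forall>k\<in>set L. D1 k = D2 k \<Longrightarrow> mpu_run U r j D1 c L st = mpu_run U r j D2 c L st"
  by (induction L arbitrary: st) (simp_all add: state_step_def chosen_def)

lemma alloc_mpu_run_notin: "i \<notin> set L \<Longrightarrow> alloc (mpu_run U r j D c L st) i = alloc st i"
  by (induction L arbitrary: st) (simp_all add: state_step_sel)

lemma price_mpu_run_nonneg:
  "0 \<le> r \<Longrightarrow> \<forall>e. 0 \<le> price st e \<Longrightarrow> \<forall>e. 0 \<le> price (mpu_run U r j D c L st) e"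
  by (induction L arbitrary: st) (simp_all add: state_step_sel)

definition bidder_order :: "nat \<Rightarrow> nat \<Rightarrow> nat list" where
  "bidder_order n j = j # filter (\<lambda>i. i \<noteq> j) [0..<n]"

lemma set_bidder_order: "j < n \<Longrightarrow> set (bidder_order n j) = {..<n}"
  unfolding bidder_order_def by auto

lemma distinct_bidder_order: "distinct (bidder_order n j)"
  unfolding bidder_order_def by auto

lemma bidder_order_split:
  assumes "i < n" "i \<noteq> j"
  obtains pre post where "bidder_order n j = pre @ i # post" "i \<notin> set pre" "i \<notin> set post"
proof -
  have "i \<in> set (filter (\<lambda>i. i \<noteq> j) [0..<n])" using assms by auto
  then obtain pre post where pp: "filter (\<lambda>i. i \<noteq> j) [0..<n] = pre @ i # post"
    by (meson split_list)
  have "distinct (pre @ i # post)" using pp[symmetric] by (metis distinct_filter distinct_upt)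
  then show ?thesis using that[of "j # pre" post] pp assms(2) unfolding bidder_order_def by auto
qed

definition initial_state :: "real \<Rightarrow> nat \<Rightarrow> mpu_state" where
  "initial_state p0 b = \<lparr>price = \<lambda>_. p0, remaining = \<lambda>_. b, alloc = \<lambda>_. {}, tentative = \<lambda>_. {},
     picks = \<lambda>_. 0\<rparr>"

definition initial_price :: "nat set \<Rightarrow> nat \<Rightarrow> nat \<Rightarrow> real \<Rightarrow> (nat \<Rightarrow> decl) \<Rightarrow> real" where
  "initial_price U n b eps D = (1 + eps) * vmax (D (winner n D)) / (4 * real b * real (card U))"

definition price_ratio :: "nat \<Rightarrow> real" where
  "price_ratio b = 2 powr (1 / real b)"

definition final_state ::
  "nat set \<Rightarrow> nat \<Rightarrow> nat \<Rightarrow> real \<Rightarrow> (nat \<Rightarrow> decl) \<Rightarrow> (nat \<Rightarrow> bool) \<Rightarrow> mpu_state" where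
  "final_state U n b eps D c =
     mpu_run U (price_ratio b) (winner n D) D c (bidder_order n (winner n D))
       (initial_state (initial_price U n b eps D) b)"

lemma mpu_alloc_eq_final_state: "mpu_alloc U n b eps D c = alloc (final_state U n b eps D c)"
proof -
  have "fold (mpu_step U (price_ratio b) (winner n D) D c) (bidder_order n (winner n D))
          (\<lambda>_. initial_price U n b eps D, \<lambda>_. b, \<lambda>_. {})
      = (price (final_state U n b eps D c), remaining (final_state U n b eps D c),
         alloc (final_state U n b eps D c))"
    unfolding final_state_def mpu_run_project by (simp add: initial_state_def)
  then show ?thesis
    unfolding mpu_alloc_def Let_def initial_price_def price_ratio_def bidder_order_def by simp
qed

lemma fold_invariant:
  assumes "\<And>i P st. i \<in> set L \<Longrightarrow> i \<notin> P \<Longrightarrow> I P st \<Longrightarrow> I (insert i P) (f i st)"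
    and "distinct L" "set L \<inter> P0 = {}" "I P0 st"
  shows "I (P0 \<union> set L) (fold f L st)"
  using assms
proof (induction L arbitrary: P0 st)
  case Nil
  then show ?case by simp
next
  case (Cons i L)
  have "I (insert i P0) (f i st)" using Cons.prems by auto
  then have "I (insert i P0 \<union> set L) (fold f L (f i st))"
    using Cons.IH[of "insert i P0" "f i st"] Cons.prems by auto
  then show ?case by simp
qed

lemma final_state_invariant:
  assumes "1 \<le> n"
    and "\<And>i P st. i < n \<Longrightarrow> i \<notin> P \<Longrightarrow> I P st \<Longrightarrow> I (insert i P) (state_step U (price_ratio b) (winner n D) D (c i) i st)"
    and "I {} (initial_state (initial_price U n b eps D) b)"
  shows "I {..<n} (final_state U n b eps D c)"
proof -
  have j: "winner n D < n" using winner_maximal[OF assms(1)] by auto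
  have "I ({} \<union> set (bidder_order n (winner n D)))
          (fold (\<lambda>i. state_step U (price_ratio b) (winner n D) D (c i) i) (bidder_order n (winner n D))
             (initial_state (initial_price U n b eps D) b))"
  proof (rule fold_invariant[where I = I])
    fix i P st assume "i \<in> set (bidder_order n (winner n D))" "i \<notin> P" "I P st"
    then show "I (insert i P) (state_step U (price_ratio b) (winner n D) D (c i) i st)"
      using assms(2) set_bidder_order[OF j] by auto
  qed (use assms(3) distinct_bidder_order in auto)
  then show ?thesis unfolding final_state_def mpu_run_def set_bidder_order[OF j] by simp
qed


section \<open>Feasibility\<close>

definition supply_accounted :: "nat set \<Rightarrow> nat \<Rightarrow> nat set \<Rightarrow> mpu_state \<Rightarrow> bool" where
  "supply_accounted U b P st \<longleftrightarrow> finite P \<and> (\<forall>l. l \<notin> P \<longrightarrow> alloc st l = {}) \<and> (\<forall>l. alloc st l \<subseteq> U) \<and>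
     (\<forall>e\<in>U. remaining st e + card {l \<in> P. e \<in> alloc st l} = b)"

lemma chosen_subset: "finite (snd (D i)) \<Longrightarrow> chosen U D i st \<subseteq> {e \<in> U. 0 < remaining st e}"
  unfolding chosen_def using choose_set_spec(1) by blast

lemma supply_accounted_step:
  assumes fin: "finite (snd (D i))" and i: "i \<notin> P" and I: "supply_accounted U b P st"
  shows "supply_accounted U b (insert i P) (state_step U r j D y i st)"
proof -
  define st' where "st' = state_step U r j D y i st"
  define R where "R = (if i = j \<or> y then chosen U D i st else {})"
  have R: "R \<subseteq> {e \<in> U. 0 < remaining st e}" using chosen_subset[of D i, OF fin] unfolding R_def by auto
  have alloc': "alloc st' = (alloc st)(i := R)" unfolding st'_def state_step_sel R_def ..
  have remaining': "remaining st' = (\<lambda>e. if e \<in> R then remaining st e - 1 else remaining st e)"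
    unfolding st'_def state_step_sel R_def ..
  have fP: "finite P" and P: "\<forall>l. l \<notin> P \<longrightarrow> alloc st l = {}"
    and count: "\<forall>e\<in>U. remaining st e + card {l \<in> P. e \<in> alloc st l} = b"
    using I unfolding supply_accounted_def by auto
  have "remaining st' e + card {l \<in> insert i P. e \<in> alloc st' l} = b" if e: "e \<in> U" for e
  proof -
    have same: "{l \<in> P. e \<in> alloc st' l} = {l \<in> P. e \<in> alloc st l}" using i unfolding alloc' by auto
    show ?thesis
    proof (cases "e \<in> R")
      case True
      have "{l \<in> insert i P. e \<in> alloc st' l} = insert i {l \<in> P. e \<in> alloc st l}"
        using True same unfolding alloc' by auto
      then have "card {l \<in> insert i P. e \<in> alloc st' l} = Suc (card {l \<in> P. e \<in> alloc st l})"
        using fP i by simp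
      moreover have "0 < remaining st e" using True R by auto
      ultimately show ?thesis using count e True unfolding remaining' by auto
    next
      case False
      have "{l \<in> insert i P. e \<in> alloc st' l} = {l \<in> P. e \<in> alloc st l}"
        using False same i unfolding alloc' by auto
      then show ?thesis using count e False unfolding remaining' by auto
    qed
  qed
  then show ?thesis using I R unfolding supply_accounted_def st'_def[symmetric] alloc' by auto
qed

lemma feasible_final_state:
  assumes "1 \<le> n" "\<forall>i<n. valid_type U k (D i)"
  shows "feasible U n b (alloc (final_state U n b eps D c))"
proof -
  have "supply_accounted U b {..<n} (final_state U n b eps D c)"
  proof (rule final_state_invariant[where I = "supply_accounted U b", OF assms(1)])
    fix i P st assume "i < n" "i \<notin> P" "supply_accounted U b P st"
    moreover have "finite (snd (D i))" using assms(2) \<open>i < n\<close> valid_type_finite by blast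
    ultimately show "supply_accounted U b (insert i P) (state_step U (price_ratio b) (winner n D) D (c i) i st)"
      by (intro supply_accounted_step)
  qed (simp add: supply_accounted_def initial_state_def)
  then show ?thesis unfolding supply_accounted_def feasible_def by (metis le_add2)
qed


section \<open>Truthfulness\<close>

lemma choose_set_verified_le:
  assumes ft: "finite (snd t)" and fb: "finite (snd bi)" and fU: "finite Ui" and p: "\<forall>e. 0 \<le> p e"
    and verified: "val bi (choose_set bi p Ui) \<le> val t (choose_set bi p Ui)"
  shows "val t (choose_set bi p Ui) \<le> val t (choose_set t p Ui)"
proof -
  define X where "X = choose_set bi p Ui"
  show ?thesis
  proof (cases "val t X = 0")
    case True
    then show ?thesis using val_nonneg[OF ft] unfolding X_def by simp
  next
    case False
    then obtain T where T: "T \<in> snd t" "T \<subseteq> X" "val t X = fst t T" using val_cases[OF ft, of X] by auto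
    have XU: "X \<subseteq> Ui" using choose_set_spec(1)[OF fb] unfolding X_def by blast
    have "sum p T \<le> sum p X" using T(2) XU fU p by (intro sum_mono2) (auto intro: finite_subset)
    also have "\<dots> \<le> val bi X" using choose_set_affordable[OF fb] unfolding X_def by blast
    also have "\<dots> \<le> val t X" using verified unfolding X_def .
    also have "\<dots> \<le> val t T" using T(3) value_le_val[OF ft T(1)] by simp
    finally have "val t T \<le> val t (choose_set t p Ui)" using choose_set_spec(3)[OF ft T(1)] T(2) XU by auto
    then show ?thesis using T(3) value_le_val[OF ft T(1)] unfolding X_def by simp
  qed
qed

lemma winner_update_eq:
  assumes n: "1 \<le> n" and agree: "\<forall>l. l \<noteq> i \<longrightarrow> D1 l = D2 l"
    and w1: "winner n D1 \<noteq> i" and w2: "winner n D2 \<noteq> i"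
  shows "winner n D1 = winner n D2"
proof -
  have dominates: "winner n Dy \<le> winner n Dx"
    if agree: "\<forall>l. l \<noteq> i \<longrightarrow> Dx l = Dy l" and wx: "winner n Dx \<noteq> i" and wy: "winner n Dy \<noteq> i"
    for Dx Dy
  proof -
    define a where "a = winner n Dx"
    define a' where "a' = winner n Dy"
    have A: "a < n" "\<forall>l<n. vmax (Dx l) \<le> vmax (Dx a)" using winner_maximal[OF n, of Dx] unfolding a_def by auto
    have A': "\<forall>l<n. vmax (Dy l) \<le> vmax (Dy a')" using winner_maximal[OF n, of Dy] unfolding a'_def by auto
    have "vmax (Dy l) \<le> vmax (Dy a)" if l: "l < n" for l
    proof (cases "l = i")
      case True
      have "vmax (Dy l) \<le> vmax (Dy a')" using A' l by auto
      also have "\<dots> = vmax (Dx a')" using agree wy unfolding a'_def by auto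
      also have "\<dots> \<le> vmax (Dx a)" using A winner_maximal[OF n, of Dy] unfolding a'_def by auto
      also have "\<dots> = vmax (Dy a)" using agree wx unfolding a_def by auto
      finally show ?thesis .
    next
      case False
      then show ?thesis using A l agree wx unfolding a_def by auto
    qed
    then show ?thesis using winner_le[OF A(1), of Dy] unfolding a_def a'_def by simp
  qed
  have agree': "\<forall>l. l \<noteq> i \<longrightarrow> D2 l = D1 l" using agree by auto
  show ?thesis using dominates[OF agree w1 w2] dominates[OF agree' w2 w1] by simp
qed

lemma winner_update_raise:
  assumes n: "1 \<le> n" and i: "i < n" and won: "winner n (D(i := bi)) = i" and raise: "vmax bi \<le> vmax t"
  shows "winner n (D(i := t)) = i"
proof (rule ccontr)
  define w where "w = winner n (D(i := t))"
  assume "w \<noteq> i"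
  have W: "w < n" "\<forall>l<n. vmax ((D(i := t)) l) \<le> vmax ((D(i := t)) w)"
    using winner_maximal[OF n, of "D(i := t)"] unfolding w_def by auto
  have top: "vmax t \<le> vmax (D w)" using W(2)[rule_format, OF i] \<open>w \<noteq> i\<close> by simp
  have "vmax ((D(i := bi)) l) \<le> vmax ((D(i := bi)) w)" if l: "l < n" for l
  proof (cases "l = i")
    case True
    then show ?thesis using raise top \<open>w \<noteq> i\<close> by simp
  next
    case False
    then show ?thesis using W(2)[rule_format, OF l] \<open>w \<noteq> i\<close> by simp
  qed
  then have "i \<le> w" using winner_le[OF W(1), of "D(i := bi)"] won by simp
  have "\<forall>l<n. vmax ((D(i := t)) l) \<le> vmax ((D(i := t)) i)"
  proof (intro allI impI)
    fix l assume l: "l < n"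
    have "vmax ((D(i := bi)) l) \<le> vmax bi" using winner_maximal[OF n, of "D(i := bi)"] won l by auto
    then show "vmax ((D(i := t)) l) \<le> vmax ((D(i := t)) i)" using raise by (cases "l = i") auto
  qed
  then have "w \<le> i" unfolding w_def using winner_le[OF i, of "D(i := t)"] by simp
  then show False using \<open>i \<le> w\<close> \<open>w \<noteq> i\<close> by simp
qed

lemma alloc_final_state_winner:
  assumes "1 \<le> n"
  shows "alloc (final_state U n b eps D c) (winner n D)
           = choose_set (D (winner n D)) (\<lambda>_. initial_price U n b eps D) {e \<in> U. 0 < b}"
proof -
  have "winner n D \<notin> set (filter (\<lambda>i. i \<noteq> winner n D) [0..<n])" by auto
  then show ?thesis unfolding final_state_def bidder_order_def mpu_run_Cons
    using alloc_mpu_run_notin by (simp add: state_step_sel chosen_def initial_state_def)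
qed

lemma val_alloc_final_state_winner:
  assumes U: "finite U" and n: "1 \<le> n" and b: "1 \<le> b" and eps: "0 < eps" "eps < 1"
    and v: "valid_type U k (D (winner n D))" "1 \<le> k"
  shows "val (D (winner n D)) (alloc (final_state U n b eps D c) (winner n D)) = vmax (D (winner n D))"
proof -
  define t where "t = D (winner n D)"
  define p0 where "p0 = initial_price U n b eps D"
  have ft: "finite (snd t)" and ne: "snd t \<noteq> {}"
    using v valid_type_finite valid_type_nonempty unfolding t_def by auto
  obtain S where S: "S \<in> snd t" "val t S = vmax t" using vmax_attained[OF ft ne] by auto
  have SU: "S \<subseteq> U" and "S \<noteq> {}" using v S(1) unfolding valid_type_def t_def by auto
  then have m: "0 < card U" using U by (metis card_gt_0_iff finite_subset subset_empty)
  have vm: "0 \<le> vmax t" using vmax_nonneg[OF ft ne] .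
  have p0: "p0 = (1 + eps) * vmax t / (4 * real b * real (card U))"
    unfolding p0_def initial_price_def t_def by simp
  have "sum (\<lambda>_. p0) S = real (card S) * p0" by simp
  also have "\<dots> \<le> real (card U) * p0"
    using card_mono[OF U SU] vm eps unfolding p0 by (intro mult_right_mono) auto
  also have "\<dots> = (1 + eps) / (4 * real b) * vmax t" unfolding p0 using m b by (simp add: field_simps)
  also have "\<dots> \<le> 1 * vmax t"
  proof (intro mult_right_mono)
    show "(1 + eps) / (4 * real b) \<le> 1" using eps b by (simp add: field_simps)
  qed (rule vm)
  finally have "sum (\<lambda>_. p0) S \<le> val t S" using S(2) by simp
  moreover have "S \<subseteq> {e \<in> U. 0 < b}" using SU b by auto
  ultimately have "val t S \<le> val t (choose_set t (\<lambda>_. p0) {e \<in> U. 0 < b})"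
    using choose_set_spec(3)[OF ft S(1)] by auto
  moreover have "val t (choose_set t (\<lambda>_. p0) {e \<in> U. 0 < b}) \<le> vmax t" using val_le_vmax[OF ft ne] .
  ultimately show ?thesis using alloc_final_state_winner[OF n] S(2) unfolding t_def p0_def by simp
qed

lemma alloc_final_state_nonwinner:
  assumes "bidder_order n (winner n D) = pre @ i # post" "i \<notin> set post" "i \<noteq> winner n D"
  shows "alloc (final_state U n b eps D c) i = (if c i then chosen U D i
           (mpu_run U (price_ratio b) (winner n D) D c pre (initial_state (initial_price U n b eps D) b))
           else {})"
  unfolding final_state_def assms(1) mpu_run_append mpu_run_Cons
  using alloc_mpu_run_notin[OF assms(2)] assms(3) by (simp add: state_step_sel)

text \<open>If bidder i is first under neither declaration, the first bidder and hence the run up to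
  bidder i are the same for both declarations.\<close>

lemma truthful_nonwinner:
  assumes U: "finite U" and n: "1 \<le> n" and b: "1 \<le> b" and k: "1 \<le> k" and eps: "0 < eps"
    and valid: "\<forall>l<n. valid_type U k (D l)" "valid_type U k t" "valid_type U k bi" and i: "i < n"
    and w1: "winner n (D(i := bi)) \<noteq> i" and w2: "winner n (D(i := t)) \<noteq> i"
    and verified: "val bi (alloc (final_state U n b eps (D(i := bi)) c) i)
                     \<le> val t (alloc (final_state U n b eps (D(i := bi)) c) i)"
  shows "val t (alloc (final_state U n b eps (D(i := bi)) c) i)
           \<le> val t (alloc (final_state U n b eps (D(i := t)) c) i)"
proof -
  define D1 where "D1 = D(i := bi)"
  define D2 where "D2 = D(i := t)"
  have agree: "\<forall>l. l \<noteq> i \<longrightarrow> D1 l = D2 l" unfolding D1_def D2_def by simp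
  define j where "j = winner n D1"
  have "winner n D1 \<noteq> i" "winner n D2 \<noteq> i" using w1 w2 unfolding D1_def D2_def .
  then have j: "winner n D2 = j" using winner_update_eq[OF n agree] unfolding j_def by simp
  obtain pre post where pp: "bidder_order n j = pre @ i # post" "i \<notin> set pre" "i \<notin> set post"
    using bidder_order_split[OF i] w1 unfolding j_def D1_def by metis
  have p0: "initial_price U n b eps D1 = initial_price U n b eps D2"
    unfolding initial_price_def j j_def using agree w1 unfolding D1_def by simp
  define X where "X = mpu_run U (price_ratio b) j D1 c pre (initial_state (initial_price U n b eps D1) b)"
  have X2: "X = mpu_run U (price_ratio b) j D2 c pre (initial_state (initial_price U n b eps D2) b)"
    unfolding X_def p0 using agree pp(2) by (intro mpu_run_cong) auto
  have A1: "alloc (final_state U n b eps D1 c) i = (if c i then choose_set bi (price X) {e \<in> U. 0 < remaining X e} else {})"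
    using alloc_final_state_nonwinner[of n D1 pre i post] pp w1 unfolding X_def j_def
    by (simp add: chosen_def D1_def)
  have A2: "alloc (final_state U n b eps D2 c) i = (if c i then choose_set t (price X) {e \<in> U. 0 < remaining X e} else {})"
    using alloc_final_state_nonwinner[of n D2 pre i post] pp w2 unfolding X2 j[symmetric]
    by (simp add: chosen_def D2_def)
  have "valid_type U k (D1 j)" using valid i winner_maximal[OF n, of D1] unfolding j_def D1_def by auto
  then have "0 \<le> vmax (D1 j)" using vmax_nonneg valid_type_finite valid_type_nonempty k by blast
  then have "0 \<le> initial_price U n b eps D1" unfolding initial_price_def j_def using eps by simp
  then have price: "\<forall>e. 0 \<le> price X e" unfolding X_def price_ratio_def
    by (intro price_mpu_run_nonneg) (auto simp: initial_state_def)
  have "finite {e \<in> U. 0 < remaining X e}" using U by simp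
  note choice = choose_set_verified_le[OF valid_type_finite[OF valid(2)] valid_type_finite[OF valid(3)]
      this price]
  show ?thesis using verified choice A1 A2 unfolding D1_def D2_def by (cases "c i") auto
qed

lemma truthful_mpu:
  assumes U: "finite U" and n: "1 \<le> n" and b: "1 \<le> b" and k: "1 \<le> k" and eps: "0 < eps" "eps < 1"
  shows "truthful_verif U n k (\<lambda>decl. mpu_alloc U n b eps decl c)"
  unfolding truthful_verif_def mpu_alloc_eq_final_state
proof (intro allI impI)
  fix D i t bi
  assume valid: "\<forall>l<n. valid_type U k (D l)" and i: "i < n" and vt: "valid_type U k t"
    and vb: "valid_type U k bi"
    and verified: "val bi (alloc (final_state U n b eps (D(i := bi)) c) i)
                     \<le> val t (alloc (final_state U n b eps (D(i := bi)) c) i)"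
  have ft: "finite (snd t)" "snd t \<noteq> {}" using vt k valid_type_finite valid_type_nonempty by auto
  have valid_upd: "\<forall>l<n. valid_type U k ((D(i := x)) l)" if "valid_type U k x" for x
    using valid that by auto
  show "val t (alloc (final_state U n b eps (D(i := bi)) c) i)
          \<le> val t (alloc (final_state U n b eps (D(i := t)) c) i)"
  proof (cases "winner n (D(i := t)) = i")
    case True
    then show ?thesis
      using val_alloc_final_state_winner[OF U n b eps, of k "D(i := t)" c] valid_upd[OF vt] i k
        val_le_vmax[OF ft] by auto
  next
    case w2: False
    have w1: "winner n (D(i := bi)) \<noteq> i"
    proof
      assume won: "winner n (D(i := bi)) = i"
      then have "vmax bi = val bi (alloc (final_state U n b eps (D(i := bi)) c) i)"
        using val_alloc_final_state_winner[OF U n b eps, of k "D(i := bi)" c] valid_upd[OF vb] i k by auto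
      then have "vmax bi \<le> vmax t" using verified val_le_vmax[OF ft] by (metis order_trans)
      then show False using winner_update_raise[OF n i won] w2 by simp
    qed
    show ?thesis using truthful_nonwinner[OF U n b k eps(1) valid vt vb i w1 w2 verified] .
  qed
qed


section \<open>Binomial estimates\<close>

lemma power_div_fact_le_exp: "real n ^ n / fact n \<le> exp (real n)"
proof -
  have s: "(\<lambda>k. real n ^ k /\<^sub>R fact k) sums exp (real n)" by (rule exp_converges)
  have "sum (\<lambda>k. real n ^ k /\<^sub>R fact k) {n} \<le> suminf (\<lambda>k. real n ^ k /\<^sub>R fact k)"
    using s by (intro sum_le_suminf) (auto simp: sums_summable)
  then show ?thesis using sums_unique[OF s] by (simp add: divide_inverse mult.commute)
qed

lemma binomial_mult_power_le:
  fixes q :: real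
  assumes "0 \<le> q"
  shows "real (N choose c) * q ^ c \<le> (real N * q) ^ c / fact c"
proof -
  have "real ((N choose c) * fact c) \<le> real (N ^ c)" using binomial_fact_pow[of N c] by linarith
  then have "real (N choose c) \<le> real N ^ c / fact c" by (simp add: of_nat_fact field_simps)
  then have "real (N choose c) * q ^ c \<le> real N ^ c / fact c * q ^ c"
    using assms by (intro mult_right_mono) auto
  then show ?thesis by (simp add: power_mult_distrib)
qed

lemma Suc_mult_three_quarters_power_le: "(real c + 1) * (3/4) ^ c \<le> (3::real)"
proof -
  have "1 + real c * (1/3) \<le> (1 + 1/3::real) ^ c" by (rule Bernoulli_inequality) simp
  then have "real c + 1 \<le> 3 * (4/3::real) ^ c" by simp
  then have "(real c + 1) * (3/4) ^ c \<le> 3 * (4/3::real) ^ c * (3/4) ^ c"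
    by (intro mult_right_mono) auto
  also have "\<dots> = 3" by (simp add: power_mult_distrib[symmetric])
  finally show ?thesis .
qed

text \<open>The two estimates below hold once K q \<le> 3b/(4 e D) with D = d^(1/b); this is where
  the choice q = 1/(2 e D log(4bm)) and K \<approx> b log(4bm) enters.\<close>

lemma d_binomial_power_le:
  fixes D q :: real and b d K :: nat
  assumes b: "1 \<le> b" and Dd: "D ^ b = real d" and D: "1 \<le> D" and q: "0 \<le> q"
    and Kq: "real K * q \<le> 3 * real b / (4 * exp 1 * D)"
  shows "real d * real (K choose b) * q ^ b \<le> 3/4"
proof -
  have "real (K choose b) * q ^ b \<le> (real K * q) ^ b / fact b" using binomial_mult_power_le[OF q] .
  also have "\<dots> \<le> (3 * real b / (4 * exp 1 * D)) ^ b / fact b"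
    using Kq q by (intro divide_right_mono power_mono) auto
  also have "\<dots> = (3/4) ^ b * (real b ^ b / fact b) / (exp 1 ^ b * D ^ b)"
    by (simp add: power_divide power_mult_distrib field_simps)
  also have "\<dots> \<le> (3/4) ^ b * exp (real b) / (exp 1 ^ b * D ^ b)"
    using power_div_fact_le_exp[of b] D by (intro divide_right_mono mult_left_mono) auto
  also have "\<dots> = (3/4) ^ b / real d"
    using Dd by (simp add: exp_of_nat_mult[symmetric])
  finally have bound: "real (K choose b) * q ^ b \<le> (3/4) ^ b / real d" .
  have d: "0 < real d" using Dd D by (metis one_le_power zero_less_one order_less_le_trans)
  have "real d * real (K choose b) * q ^ b \<le> real d * ((3/4) ^ b / real d)"
    using mult_left_mono[OF bound, of "real d"] d by (simp add: mult.assoc)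
  also have "\<dots> = (3/4) ^ b" using d by simp
  also have "\<dots> \<le> (3/4) ^ 1" using b by (intro power_decreasing) auto
  finally show ?thesis by simp
qed

lemma b_d_binomial_power_le:
  fixes D q :: real and b d K :: nat
  assumes b: "1 \<le> b" and Dd: "D ^ b = real d" and D: "1 \<le> D" and q: "0 \<le> q"
    and Kq: "real K * q \<le> 3 * real b / (4 * exp 1 * D)"
  shows "real b * real d * real ((K - 1) choose (b - 1)) * q ^ (b - 1) \<le> 9 * D"
proof -
  obtain c where bc: "b = Suc c" using b by (cases b) auto
  have "real ((K - 1) choose c) * q ^ c \<le> (real (K - 1) * q) ^ c / fact c"
    using binomial_mult_power_le[OF q] .
  also have "\<dots> \<le> (3 * real b / (4 * exp 1 * D)) ^ c / fact c"
  proof -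
    have "real (K - 1) * q \<le> real K * q" using q by (intro mult_right_mono) auto
    then show ?thesis using Kq q by (intro divide_right_mono power_mono) auto
  qed
  finally have bound: "real ((K - 1) choose c) * q ^ c \<le> (3 * real b / (4 * exp 1 * D)) ^ c / fact c" .
  have Dc: "real d = D ^ c * D" using Dd bc by (simp add: mult.commute)
  have "real b * real d * real ((K - 1) choose c) * q ^ c
      \<le> real b * real d * ((3 * real b / (4 * exp 1 * D)) ^ c / fact c)"
    using mult_left_mono[OF bound, of "real b * real d"] by (simp only: mult.assoc) simp
  also have "\<dots> = real b * (3/4) ^ c * (real b ^ b / fact b) * D / exp 1 ^ c"
  proof -
    have e1: "(3 * real b / (4 * exp 1 * D)) ^ c = (3/4) ^ c * real b ^ c / (exp 1 ^ c * D ^ c)"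
    proof -
      have "3 * real b / (4 * exp 1 * D) = (3/4) * real b / (exp 1 * D)" by simp
      then show ?thesis by (simp add: power_divide power_mult_distrib)
    qed
    have "real b ^ b / fact b = real b ^ c / fact c" using bc b by simp
    then show ?thesis unfolding e1 Dc using D by (simp add: field_simps)
  qed
  also have "\<dots> \<le> real b * (3/4) ^ c * exp (real b) * D / exp 1 ^ c"
    using power_div_fact_le_exp[of b] D by (intro divide_right_mono mult_right_mono mult_left_mono) auto
  also have "\<dots> = exp 1 * ((real c + 1) * (3/4) ^ c * D)"
    unfolding bc by (simp add: exp_of_nat_mult[symmetric] exp_add field_simps)
  also have "\<dots> \<le> 3 * ((real c + 1) * (3/4) ^ c * D)"
    using exp_le D by (intro mult_right_mono) auto
  also have "\<dots> \<le> 3 * (3 * D)"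
    using Suc_mult_three_quarters_power_le[of c] D by (intro mult_left_mono mult_right_mono) auto
  finally show ?thesis using bc by simp
qed

text \<open>tail_prob q N c is the probability that at least c of N independent coins of bias q
  come up heads.\<close>

fun tail_prob :: "real \<Rightarrow> nat \<Rightarrow> nat \<Rightarrow> real" where
  "tail_prob q N 0 = 1"
| "tail_prob q 0 (Suc c) = 0"
| "tail_prob q (Suc N) (Suc c) = q * tail_prob q N c + (1 - q) * tail_prob q N (Suc c)"

lemma tail_prob_nonneg: "0 \<le> q \<Longrightarrow> q \<le> 1 \<Longrightarrow> 0 \<le> tail_prob q N c"
  by (induction q N c rule: tail_prob.induct) auto

lemma tail_prob_le_binomial: "0 \<le> q \<Longrightarrow> q \<le> 1 \<Longrightarrow> tail_prob q N c \<le> real (N choose c) * q ^ c"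
proof (induction q N c rule: tail_prob.induct)
  case (1 q N)
  then show ?case by simp
next
  case (2 q c)
  then show ?case by simp
next
  case (3 q N c)
  have "q * tail_prob q N c \<le> q * (real (N choose c) * q ^ c)"
    using 3 by (intro mult_left_mono) auto
  moreover have "(1 - q) * tail_prob q N (Suc c) \<le> real (N choose Suc c) * q ^ Suc c"
  proof -
    have "(1 - q) * tail_prob q N (Suc c) \<le> tail_prob q N (Suc c)"
      using tail_prob_nonneg[OF 3(3,4), of N "Suc c"] 3(3) by (simp add: algebra_simps)
    also have "\<dots> \<le> real (N choose Suc c) * q ^ Suc c" using 3 by auto
    finally show ?thesis .
  qed
  ultimately have "tail_prob q (Suc N) (Suc c)
      \<le> q * (real (N choose c) * q ^ c) + real (N choose Suc c) * q ^ Suc c"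
    by simp
  also have "\<dots> = real (Suc N choose Suc c) * q ^ Suc c" by (simp add: algebra_simps)
  finally show ?case .
qed


section \<open>The approximation ratio\<close>

lemma sum_fun_upd:
  fixes h :: "nat \<Rightarrow> 'b \<Rightarrow> real"
  assumes "finite I" "i \<in> I"
  shows "(\<Sum>l\<in>I. h l ((g(i := x)) l)) = (\<Sum>l\<in>I. h l (g l)) + (h i x - h i (g i))"
proof -
  have "(\<Sum>l\<in>I. h l ((g(i := x)) l)) = h i x + (\<Sum>l\<in>I - {i}. h l ((g(i := x)) l))"
    using assms by (simp add: sum.remove)
  also have "(\<Sum>l\<in>I - {i}. h l ((g(i := x)) l)) = (\<Sum>l\<in>I - {i}. h l (g l))"
    by (intro sum.cong) auto
  also have "(\<Sum>l\<in>I. h l (g l)) = h i (g i) + (\<Sum>l\<in>I - {i}. h l (g l))"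
    using assms by (simp add: sum.remove)
  ultimately show ?thesis by simp
qed

lemma sum_subsets_le_mult_sum:
  fixes w :: "nat \<Rightarrow> real" and T A :: "nat \<Rightarrow> nat set"
  assumes fU: "finite U" and TA: "\<forall>i<n. T i \<subseteq> A i" and AU: "\<forall>i<n. A i \<subseteq> U"
    and cover: "\<forall>e\<in>U. card {i \<in> {..<n}. e \<in> A i} \<le> b" and w: "\<forall>e\<in>U. 0 \<le> w e"
  shows "(\<Sum>i<n. \<Sum>e\<in>T i. w e) \<le> real b * (\<Sum>e\<in>U. w e)"
proof -
  have "(\<Sum>i<n. \<Sum>e\<in>T i. w e) = (\<Sum>i<n. \<Sum>e\<in>U. if e \<in> T i then w e else 0)"
  proof (rule sum.cong[OF refl])
    fix i assume "i \<in> {..<n}"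
    then have "U \<inter> T i = T i" using TA AU by auto
    then show "(\<Sum>e\<in>T i. w e) = (\<Sum>e\<in>U. if e \<in> T i then w e else 0)"
      using sum.inter_restrict[OF fU, of w "T i"] by simp
  qed
  also have "\<dots> = (\<Sum>e\<in>U. \<Sum>i<n. if e \<in> T i then w e else 0)" by (rule sum.swap)
  also have "\<dots> = (\<Sum>e\<in>U. w e * real (card {i \<in> {..<n}. e \<in> T i}))"
  proof (rule sum.cong[OF refl])
    fix e assume "e \<in> U"
    have "(\<Sum>i<n. if e \<in> T i then w e else 0) = (\<Sum>i\<in>{..<n} \<inter> {i. e \<in> T i}. w e)"
      using sum.inter_restrict[of "{..<n}" "\<lambda>_. w e" "{i. e \<in> T i}"] by (simp del: sum_constant)
    also have "{..<n} \<inter> {i. e \<in> T i} = {i \<in> {..<n}. e \<in> T i}" by auto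
    finally show "(\<Sum>i<n. if e \<in> T i then w e else 0) = w e * real (card {i \<in> {..<n}. e \<in> T i})"
      by simp
  qed
  also have "\<dots> \<le> (\<Sum>e\<in>U. w e * real b)"
  proof (intro sum_mono mult_left_mono)
    fix e assume e: "e \<in> U"
    have "card {i \<in> {..<n}. e \<in> T i} \<le> card {i \<in> {..<n}. e \<in> A i}" using TA by (intro card_mono) auto
    then show "real (card {i \<in> {..<n}. e \<in> T i}) \<le> real b" using cover e by fastforce
    show "0 \<le> w e" using w e by auto
  qed
  also have "\<dots> = real b * (\<Sum>e\<in>U. w e)" by (simp add: sum_distrib_left mult.commute)
  finally show ?thesis .
qed

lemma three_term_bound:
  fixes OP EV EW v D L :: real
  assumes "OP \<le> 8 * EV + 2 * v + 36 * D * v" "EV \<le> 2 * exp 1 * D * L * EW" "v \<le> EW"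
    and "1 \<le> D" "2 \<le> L" "0 < v"
  shows "OP \<le> 100 * D * L * EW"
proof -
  have EW: "0 \<le> EW" using assms(3,6) by simp
  have "1 * 1 \<le> D * L" using assms(4,5) by (intro mult_mono) auto
  then have X: "EW \<le> D * L * EW" using EW mult_right_mono[of 1 "D * L" EW] by simp
  have "D * EW * 1 \<le> D * EW * L" using assms(4,5) EW by (intro mult_left_mono mult_nonneg_nonneg) auto
  moreover have "D * v \<le> D * EW" using assms(3,4) by (intro mult_left_mono) auto
  ultimately have "D * v \<le> D * L * EW" by (simp add: algebra_simps)
  then have c: "36 * D * v \<le> 36 * (D * L * EW)" by (simp add: mult.assoc)
  have "8 * EV \<le> (16 * exp 1) * (D * L * EW)" using assms(2) by (simp add: algebra_simps)
  also have "\<dots> \<le> 48 * (D * L * EW)" using exp_le X EW by (intro mult_right_mono) auto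
  finally have "OP \<le> 100 * (D * L * EW)" using assms(1,3) X EW c by linarith
  then show ?thesis by (simp add: mult.assoc)
qed

lemma state_step_first: "state_step U r j D y j st = state_step U r j D False j st"
  unfolding state_step_def by simp

locale mpu_instance =
  fixes U :: "nat set" and n b k :: nat and eps :: real and d :: nat and t :: "nat \<Rightarrow> decl"
  assumes U: "finite U" "U \<noteq> {}" and n: "1 \<le> n" and b: "1 \<le> b" and k: "1 \<le> k"
    and eps: "0 < eps" "eps < 1"
    and valid: "\<forall>i<n. valid_type U k (t i)"
    and demand_card_le: "\<forall>i<n. \<forall>S\<in>snd (t i). 0 < val (t i) S \<longrightarrow> card S \<le> d"
    and demand_card_eq: "\<exists>i<n. \<exists>S\<in>snd (t i). 0 < val (t i) S \<and> card S = d"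
begin

abbreviation "outcome c \<equiv> final_state U n b eps t c"

definition "jtop = winner n t"
definition "vtop = vmax (t jtop)"
definition "m = card U"
definition "p0 = initial_price U n b eps t"
definition "r = price_ratio b"
definition "q = qprob b m d"
definition "droot = real d powr (1 / real b)"
definition "logm = log 2 (real (4 * b * m))"
definition "K = nat \<lceil>real b * logm\<rceil>"
definition "others = filter (\<lambda>i. i \<noteq> jtop) [0..<n]"
definition "after_top = state_step U r jtop t False jtop (initial_state p0 b)"
definition "S_top = chosen U t jtop (initial_state p0 b)"

lemma finite_demand: "i < n \<Longrightarrow> finite (snd (t i))"
  using valid valid_type_finite by blast

lemma demand_nonempty: "i < n \<Longrightarrow> snd (t i) \<noteq> {}"
  using valid valid_type_nonempty k by blast

lemma
  shows jtop_less: "jtop < n" and vmax_le_vtop: "\<And>i. i < n \<Longrightarrow> vmax (t i) \<le> vtop"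
  using winner_maximal[OF n, of t] unfolding jtop_def vtop_def by auto

lemma val_le_vtop: "i < n \<Longrightarrow> val (t i) X \<le> vtop"
  using val_le_vmax[OF finite_demand demand_nonempty] vmax_le_vtop order_trans by blast

lemma vtop_pos: "0 < vtop"
proof -
  obtain i S where "i < n" "S \<in> snd (t i)" "0 < val (t i) S" using demand_card_eq by auto
  then show ?thesis using val_le_vtop[of i S] by simp
qed

lemma d_ge_1: "1 \<le> d"
proof -
  obtain i S where iS: "i < n" "S \<in> snd (t i)" "card S = d" using demand_card_eq by auto
  have "S \<noteq> {}" "S \<subseteq> U" using valid iS unfolding valid_type_def by auto
  then have "0 < card S" using U(1) finite_subset card_gt_0_iff by blast
  then show ?thesis using iS by simp
qed

lemma m_pos: "0 < m"
  unfolding m_def using U card_gt_0_iff by blast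

lemma p0_eq: "p0 = (1 + eps) * vtop / (4 * real b * real m)"
  unfolding p0_def initial_price_def vtop_def jtop_def m_def by simp

lemma p0_pos: "0 < p0"
  unfolding p0_eq using vtop_pos eps b m_pos by auto

lemma r_ge_1: "1 \<le> r"
  unfolding r_def price_ratio_def using b by (intro ge_one_powr_ge_zero) auto

lemma b_mult_r_minus_1_le: "real b * (r - 1) \<le> 1"
proof -
  have x: "0 < 1 + 1 / real b" by (simp add: add_pos_nonneg)
  have "1 + real b * (1 / real b) \<le> (1 + 1 / real b) ^ b"
    by (rule Bernoulli_inequality) (simp add: order_trans[of _ 0])
  then have "2 \<le> (1 + 1 / real b) ^ b" using b by simp
  then have "2 powr (1 / real b) \<le> ((1 + 1 / real b) ^ b) powr (1 / real b)"
    by (intro powr_mono2) auto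
  also have "\<dots> = (1 + 1 / real b) powr (real b * (1 / real b))"
    using x by (simp add: powr_realpow[symmetric] powr_powr)
  also have "\<dots> = 1 + 1 / real b" using b by simp
  finally show ?thesis unfolding r_def price_ratio_def using b by (simp add: field_simps)
qed

lemma logm_ge_2: "2 \<le> logm"
proof -
  have "4 * 1 * 1 \<le> 4 * b * m" using b m_pos by (intro mult_le_mono) auto
  then have "(4::real) \<le> real (4 * b * m)" by linarith
  then have "log 2 4 \<le> logm" unfolding logm_def by simp
  moreover have "log 2 (4::real) = 2"
    using log_powr_cancel[of 2 2] by (simp add: powr_numeral)
  ultimately show ?thesis by simp
qed

lemma
  shows droot_ge_1: "1 \<le> droot" and droot_power: "droot ^ b = real d"
proof -
  show "1 \<le> droot" unfolding droot_def using d_ge_1 b by (simp add: ge_one_powr_ge_zero)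
  have "droot ^ b = real d powr (real b * (1 / real b))"
    unfolding droot_def using d_ge_1 by (simp add: powr_power)
  also have "\<dots> = real d" using b d_ge_1 by simp
  finally show "droot ^ b = real d" .
qed

lemma q_eq: "q = 1 / (2 * exp 1 * droot * logm)"
  unfolding q_def qprob_def droot_def logm_def by simp

lemma q_pos: "0 < q"
  unfolding q_eq using droot_ge_1 logm_ge_2 by simp

lemma q_le_1: "q \<le> 1"
proof -
  have "1 * 1 * 1 \<le> exp 1 * droot * logm"
    using droot_ge_1 logm_ge_2 by (intro mult_mono) auto
  then show ?thesis unfolding q_eq by simp
qed

lemma K_mult_q_le: "real K * q \<le> 3 * real b / (4 * exp 1 * droot)"
proof -
  have "real K \<le> real b * logm + 1"
    unfolding K_def using logm_ge_2 b by (simp add: of_nat_nat ceiling_correct less_imp_le)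
  moreover have "1 * 2 \<le> real b * logm" using logm_ge_2 b by (intro mult_mono) auto
  ultimately have "real K * q \<le> 3/2 * real b * logm * q" using q_pos by (intro mult_right_mono) auto
  also have "\<dots> = 3 * real b / (4 * exp 1 * droot)"
    unfolding q_eq using logm_ge_2 droot_ge_1 by (simp add: field_simps)
  finally show ?thesis .
qed

text \<open>Since p0 r^K exceeds every value, a good that is still affordable has been picked fewer
  than K times.\<close>

lemma picks_lt_K:
  assumes "p0 * r ^ s \<le> vtop"
  shows "s < K"
proof -
  have r: "r ^ s = 2 powr (real s / real b)" unfolding r_def price_ratio_def by (simp add: powr_power)
  have "vtop * ((1 + eps) * 2 powr (real s / real b)) \<le> vtop * (4 * real b * real m)"
    using assms vtop_pos b m_pos unfolding p0_eq r by (simp add: field_simps)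
  then have "(1 + eps) * 2 powr (real s / real b) \<le> 4 * real b * real m"
    using vtop_pos by (simp only: mult_le_cancel_left_pos)
  moreover have "2 powr (real s / real b) < (1 + eps) * 2 powr (real s / real b)"
    using eps by simp
  ultimately have "2 powr (real s / real b) < 4 * real b * real m" by linarith
  then have "2 powr (real s / real b) < real (4 * b * m)" by simp
  then have "real s / real b < logm" unfolding logm_def using b m_pos
    by (subst powr_less_iff[symmetric]) auto
  then have "real s < real b * logm" using b by (simp add: field_simps)
  then have "real s < real_of_int \<lceil>real b * logm\<rceil>" by (meson le_of_int_ceiling order_less_le_trans)
  then show ?thesis unfolding K_def by linarith
qed

lemma set_others: "set others = {..<n} - {jtop}"
  unfolding others_def by auto

lemma outcome_eq: "outcome c = mpu_run U r jtop t c others after_top"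
  unfolding final_state_def jtop_def[symmetric] bidder_order_def others_def[symmetric]
    mpu_run_Cons after_top_def r_def p0_def
  by (subst state_step_first) simp

lemma after_top_sel:
  "price after_top = (\<lambda>e. if e \<in> S_top then r * p0 else p0)"
  "remaining after_top = (\<lambda>e. if e \<in> S_top then b - 1 else b)"
  "alloc after_top = (\<lambda>_. {})(jtop := S_top)"
  "tentative after_top = (\<lambda>_. {})(jtop := S_top)"
  "picks after_top = (\<lambda>e. if e \<in> S_top then 1 else 0)"
  unfolding after_top_def state_step_sel S_top_def by (auto simp: fun_eq_iff initial_state_def)

lemma S_top_eq: "S_top = choose_set (t jtop) (\<lambda>_. p0) {e \<in> U. 0 < b}"
  unfolding S_top_def chosen_def by (simp add: initial_state_def)

lemma val_S_top: "val (t jtop) S_top = vtop"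
  using val_alloc_final_state_winner[OF U(1) n b eps, of k t c] alloc_final_state_winner[OF n, of U b eps t c]
    valid jtop_less k
  unfolding S_top_eq vtop_def jtop_def p0_def by simp

lemma
  shows S_top_subset: "S_top \<subseteq> U" and card_S_top_le: "card S_top \<le> d"
proof -
  have f: "finite (snd (t jtop))" using finite_demand jtop_less .
  have "S_top \<subseteq> {e \<in> U. 0 < b}" unfolding S_top_eq using choose_set_spec(1)[OF f] by blast
  then show "S_top \<subseteq> U" by auto
  have "S_top \<noteq> {}" using val_S_top vtop_pos val_empty valid jtop_less by fastforce
  then have "S_top \<in> snd (t jtop)" using choose_set_spec(2)[OF f] unfolding S_top_eq by blast
  then show "card S_top \<le> d" using demand_card_le jtop_less val_S_top vtop_pos by auto
qed

lemma coins_eq: "coins n b m d = Pi_pmf {..<n} False (\<lambda>_. bernoulli_pmf q)"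
  unfolding coins_def q_def ..

lemma integrable_coins: "integrable (measure_pmf (coins n b m d)) (f :: _ \<Rightarrow> real)"
  unfolding coins_eq
  by (intro integrable_measure_pmf_finite) (auto simp: set_Pi_pmf intro!: finite_PiE_dflt)

lemma expectation_outcome_le:
  fixes \<Phi> :: "mpu_state \<Rightarrow> real" and Inv :: "nat set \<Rightarrow> mpu_state \<Rightarrow> bool"
  assumes "\<And>i y st B. i \<in> B \<Longrightarrow> Inv B st \<Longrightarrow> Inv (B - {i}) (state_step U r jtop t y i st)"
    and "\<And>i st B. i \<in> B \<Longrightarrow> Inv B st \<Longrightarrow>
           q * \<Phi> (state_step U r jtop t True i st) + (1 - q) * \<Phi> (state_step U r jtop t False i st) \<le> \<Phi> st"
    and "Inv (set others) after_top"
  shows "measure_pmf.expectation (coins n b m d) (\<lambda>c. \<Phi> (outcome c)) \<le> \<Phi> after_top"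
  unfolding coins_eq outcome_eq mpu_run_def
  using assms q_pos q_le_1 set_others
  by (intro expectation_Pi_bernoulli_fold_le[where Inv = Inv]) (auto simp: others_def)

definition tentative_excess :: "mpu_state \<Rightarrow> real" where "tentative_excess st =
  q * (\<Sum>i<n. val (t i) (tentative st i)) - (\<Sum>i<n. val (t i) (alloc st i))"

lemma expectation_tentative_excess_le:
  "measure_pmf.expectation (coins n b m d) (\<lambda>c. tentative_excess (outcome c)) \<le> q * vtop - vtop"
proof -
  define Inv where "Inv = (\<lambda>B (st :: mpu_state). B \<subseteq> {..<n} - {jtop} \<and> (\<forall>i\<in>B. alloc st i = {} \<and> tentative st i = {}))"
  have empty: "val (t i) {} = 0" if "i < n" for i
    using val_empty valid that by blast
  have "measure_pmf.expectation (coins n b m d) (\<lambda>c. tentative_excess (outcome c)) \<le> tentative_excess after_top"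
  proof (rule expectation_outcome_le[where Inv = Inv])
    fix i y st B assume "i \<in> B" "Inv B st"
    then show "Inv (B - {i}) (state_step U r jtop t y i st)" unfolding Inv_def by (auto simp: state_step_sel)
  next
    fix i st B assume "i \<in> B" "Inv B st"
    then have i: "i < n" "i \<noteq> jtop" "alloc st i = {}" "tentative st i = {}" unfolding Inv_def by auto
    define S where "S = chosen U t i st"
    note upd = sum_fun_upd[of "{..<n}" i "\<lambda>l. val (t l)"]
    have "(\<Sum>l<n. val (t l) (tentative (state_step U r jtop t y i st) l))
            = (\<Sum>l<n. val (t l) (tentative st l)) + val (t i) S" for y
      unfolding state_step_sel S_def using upd i empty by simp
    moreover have "(\<Sum>l<n. val (t l) (alloc (state_step U r jtop t True i st) l))
            = (\<Sum>l<n. val (t l) (alloc st l)) + val (t i) S"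
      unfolding state_step_sel S_def using upd i empty by simp
    moreover have "(\<Sum>l<n. val (t l) (alloc (state_step U r jtop t False i st) l))
            = (\<Sum>l<n. val (t l) (alloc st l))"
      unfolding state_step_sel using upd i empty by simp
    ultimately show "q * tentative_excess (state_step U r jtop t True i st)
        + (1 - q) * tentative_excess (state_step U r jtop t False i st) \<le> tentative_excess st"
      unfolding tentative_excess_def by (simp add: algebra_simps)
  next
    show "Inv (set others) after_top" unfolding Inv_def set_others after_top_sel by auto
  qed
  moreover have "(\<Sum>l<n. val (t l) (((\<lambda>_. {})(jtop := S_top)) l)) = vtop"
    using sum_fun_upd[of "{..<n}" jtop "\<lambda>l. val (t l)" "\<lambda>_. {}" S_top] jtop_less val_S_top empty by simp
  ultimately show ?thesis unfolding tentative_excess_def after_top_sel by simp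
qed

text \<open>While the price of e is p0 r^s, at most K - s further picks of e are possible, each
  accepted with probability q; e is exhausted only if remaining e of them are accepted.\<close>

definition exhaustion_bound :: "nat \<Rightarrow> mpu_state \<Rightarrow> real" where
  "exhaustion_bound e st = tail_prob q (K - picks st e) (remaining st e)"

lemma chosen_picks_lt_K:
  assumes i: "i < n" and p: "\<forall>e'. price st e' = p0 * r ^ picks st e'" and e: "e \<in> chosen U t i st"
  shows "picks st e < K" "0 < remaining st e"
proof -
  have f: "finite (snd (t i))" using finite_demand i .
  define S where "S = chosen U t i st"
  have S: "S \<subseteq> {e \<in> U. 0 < remaining st e}" unfolding S_def using chosen_subset[of t i, OF f] .
  then show "0 < remaining st e" using e unfolding S_def by auto
  have "finite S" using S U(1) finite_subset by fastforce
  moreover have "\<forall>e'. 0 \<le> price st e'" using p p0_pos r_ge_1 by simp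
  ultimately have "price st e \<le> sum (price st) S" using e unfolding S_def by (intro member_le_sum) auto
  also have "\<dots> \<le> val (t i) S" using choose_set_affordable[OF f] unfolding S_def chosen_def .
  also have "\<dots> \<le> vtop" using val_le_vtop[OF i] .
  finally show "picks st e < K" using p picks_lt_K by simp
qed

lemma expectation_exhaustion_bound_le:
  "measure_pmf.expectation (coins n b m d) (\<lambda>c. exhaustion_bound e (outcome c)) \<le> exhaustion_bound e after_top"
proof (rule expectation_outcome_le[where Inv = "\<lambda>B (st :: mpu_state). B \<subseteq> {..<n} - {jtop} \<and> (\<forall>e'. price st e' = p0 * r ^ picks st e')"])
  fix i y B and st :: mpu_state
  assume "i \<in> B" "B \<subseteq> {..<n} - {jtop} \<and> (\<forall>e'. price st e' = p0 * r ^ picks st e')"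
  then show "B - {i} \<subseteq> {..<n} - {jtop} \<and>
      (\<forall>e'. price (state_step U r jtop t y i st) e' = p0 * r ^ picks (state_step U r jtop t y i st) e')"
    by (auto simp: state_step_sel)
next
  fix i B and st :: mpu_state
  assume "i \<in> B" and I: "B \<subseteq> {..<n} - {jtop} \<and> (\<forall>e'. price st e' = p0 * r ^ picks st e')"
  then have i: "i < n" "i \<noteq> jtop" and p: "\<forall>e'. price st e' = p0 * r ^ picks st e'" by auto
  show "q * exhaustion_bound e (state_step U r jtop t True i st)
      + (1 - q) * exhaustion_bound e (state_step U r jtop t False i st) \<le> exhaustion_bound e st"
  proof (cases "e \<in> chosen U t i st")
    case False
    then show ?thesis unfolding exhaustion_bound_def state_step_sel using i by (simp add: algebra_simps)
  next
    case True
    note lt = chosen_picks_lt_K[OF i(1) p True]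
    obtain N where N: "K - picks st e = Suc N" using lt(1) by (metis Suc_diff_Suc)
    obtain s where s: "remaining st e = Suc s" using lt(2) gr0_conv_Suc by blast
    have "exhaustion_bound e st = q * tail_prob q (K - Suc (picks st e)) (remaining st e - 1)
        + (1 - q) * tail_prob q (K - Suc (picks st e)) (remaining st e)"
    proof -
      have "K - Suc (picks st e) = N" using N by simp
      then show ?thesis unfolding exhaustion_bound_def N s by simp
    qed
    then show ?thesis unfolding exhaustion_bound_def state_step_sel using i True by simp
  qed
next
  show "set others \<subseteq> {..<n} - {jtop} \<and> (\<forall>e'. price after_top e' = p0 * r ^ picks after_top e')"
    unfolding set_others after_top_sel by auto
qed

definition "beta0 = real (K choose b) * q ^ b"
definition "beta1 = real ((K - 1) choose (b - 1)) * q ^ (b - 1)"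

lemma beta_nonneg: "0 \<le> beta0" "0 \<le> beta1"
  unfolding beta0_def beta1_def using q_pos by auto

lemma d_mult_beta0_le: "real d * beta0 \<le> 3/4"
  unfolding beta0_def using d_binomial_power_le[OF b droot_power droot_ge_1 _ K_mult_q_le] q_pos
  by (simp add: mult.assoc)

lemma b_d_mult_beta1_le: "real b * real d * beta1 \<le> 9 * droot"
  unfolding beta1_def using b_d_binomial_power_le[OF b droot_power droot_ge_1 _ K_mult_q_le] q_pos
  by (simp add: mult.assoc)

lemma exhaustion_bound_after_top:
  "exhaustion_bound e after_top \<le> beta0 + (if e \<in> S_top then beta1 else 0)"
  using tail_prob_le_binomial[OF less_imp_le[OF q_pos] q_le_1] beta_nonneg
  unfolding exhaustion_bound_def after_top_sel beta0_def beta1_def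
  by (cases "e \<in> S_top") (auto intro: add_increasing)

definition "realized_welfare c = (\<Sum>i<n. val (t i) (alloc (outcome c) i))"

lemma vtop_le_realized_welfare: "vtop \<le> realized_welfare c"
proof -
  have "alloc (outcome c) jtop = S_top"
    unfolding outcome_eq using alloc_mpu_run_notin[of jtop others] set_others after_top_sel by simp
  then have "vtop = val (t jtop) (alloc (outcome c) jtop)" using val_S_top by simp
  also have "\<dots> \<le> realized_welfare c" unfolding realized_welfare_def
    using jtop_less val_nonneg finite_demand by (intro member_le_sum) auto
  finally show ?thesis .
qed

lemma expectation_tentative_welfare_le:
  "q * measure_pmf.expectation (coins n b m d) (\<lambda>c. \<Sum>i<n. val (t i) (tentative (outcome c) i))
     \<le> measure_pmf.expectation (coins n b m d) realized_welfare"
proof -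
  have "measure_pmf.expectation (coins n b m d) (\<lambda>c. tentative_excess (outcome c))
      = q * measure_pmf.expectation (coins n b m d) (\<lambda>c. \<Sum>i<n. val (t i) (tentative (outcome c) i))
        - measure_pmf.expectation (coins n b m d) realized_welfare"
    unfolding tentative_excess_def realized_welfare_def
    by (simp add: Bochner_Integration.integral_diff integrable_coins integral_mult_right_zero)
  moreover have "q * vtop \<le> 1 * vtop" using q_le_1 vtop_pos by (intro mult_right_mono) auto
  ultimately show ?thesis using expectation_tentative_excess_le by linarith
qed

lemma expectation_tentative_welfare_le_log:
  "measure_pmf.expectation (coins n b m d) (\<lambda>c. \<Sum>i<n. val (t i) (tentative (outcome c) i))
     \<le> 2 * exp 1 * droot * logm * measure_pmf.expectation (coins n b m d) realized_welfare"
  using mult_left_mono[OF expectation_tentative_welfare_le, of "2 * exp 1 * droot * logm"]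
    droot_ge_1 logm_ge_2
  unfolding q_eq by (simp add: mult.assoc)

lemma vtop_le_expectation_realized_welfare:
  "vtop \<le> measure_pmf.expectation (coins n b m d) realized_welfare"
  using integral_mono[OF _ integrable_coins vtop_le_realized_welfare] by simp

end

locale mpu_benchmark = mpu_instance +
  fixes A :: "nat \<Rightarrow> nat set"
  assumes A_subset: "\<forall>i<n. A i \<subseteq> U" and A_feasible: "\<forall>e\<in>U. card {i \<in> {..<n}. e \<in> A i} \<le> b"
begin

definition "opt_val i = val (t i) (A i)"

definition "opt_set i =
  (if 0 < opt_val i then (SOME T. T \<in> snd (t i) \<and> T \<subseteq> A i \<and> opt_val i = fst (t i) T) else {})"

lemma opt_val_nonneg: "i < n \<Longrightarrow> 0 \<le> opt_val i"
  unfolding opt_val_def using val_nonneg finite_demand by blast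

lemma opt_val_le_vtop: "i < n \<Longrightarrow> opt_val i \<le> vtop"
  unfolding opt_val_def using val_le_vtop by blast

lemma opt_set_props:
  assumes i: "i < n"
  shows "opt_set i \<subseteq> A i" "finite (opt_set i)" "card (opt_set i) \<le> d"
    "0 < opt_val i \<Longrightarrow> opt_set i \<in> snd (t i) \<and> opt_val i \<le> val (t i) (opt_set i)"
proof -
  have f: "finite (snd (t i))" using finite_demand i .
  have P: "opt_set i \<in> snd (t i) \<and> opt_set i \<subseteq> A i \<and> opt_val i = fst (t i) (opt_set i)"
    if pos: "0 < opt_val i"
  proof -
    have "\<exists>T. T \<in> snd (t i) \<and> T \<subseteq> A i \<and> opt_val i = fst (t i) T"
      using val_pos_attained[OF f pos[unfolded opt_val_def]] unfolding opt_val_def by blast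
    from someI_ex[OF this] show ?thesis unfolding opt_set_def using pos by simp
  qed
  have pos_val: "opt_set i \<in> snd (t i) \<and> opt_val i \<le> val (t i) (opt_set i)" if pos: "0 < opt_val i"
    using P[OF pos] value_le_val[OF f, of "opt_set i"] by simp
  show sub: "opt_set i \<subseteq> A i"
  proof (cases "0 < opt_val i")
    case True
    then show ?thesis using P by blast
  qed (simp add: opt_set_def)
  show "finite (opt_set i)" using sub A_subset i U(1) by (meson finite_subset)
  show "0 < opt_val i \<Longrightarrow> opt_set i \<in> snd (t i) \<and> opt_val i \<le> val (t i) (opt_set i)"
    by (rule pos_val)
  show "card (opt_set i) \<le> d"
  proof (cases "0 < opt_val i")
    case True
    then have "opt_set i \<in> snd (t i)" "0 < val (t i) (opt_set i)" using pos_val by auto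
    then show ?thesis using demand_card_le i by blast
  qed (simp add: opt_set_def)
qed

lemma opt_val_charged:
  assumes i: "i < n" and p: "\<forall>e. 0 \<le> price st e"
  shows "opt_val i \<le> val (t i) (chosen U t i st) + (\<Sum>e\<in>opt_set i. price st e)
           + opt_val i * real (card {e \<in> opt_set i. remaining st e = 0})"
proof -
  have f: "finite (snd (t i))" using finite_demand i .
  have S0: "0 \<le> val (t i) (chosen U t i st)" using val_nonneg f by blast
  have P0: "0 \<le> (\<Sum>e\<in>opt_set i. price st e)" using p by (simp add: sum_nonneg)
  have X0: "0 \<le> opt_val i * real (card {e \<in> opt_set i. remaining st e = 0})"
    using opt_val_nonneg i by simp
  consider "opt_val i \<le> 0" | "\<exists>e\<in>opt_set i. remaining st e = 0"
    | "0 < opt_val i" "opt_set i \<subseteq> {e \<in> U. 0 < remaining st e}"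
  proof -
    have "opt_set i \<subseteq> U" using opt_set_props(1)[OF i] A_subset i by blast
    then have "(\<forall>e\<in>opt_set i. remaining st e \<noteq> 0) \<longrightarrow> opt_set i \<subseteq> {e \<in> U. 0 < remaining st e}"
      by auto
    then show thesis using that by (meson not_less)
  qed
  then show ?thesis
  proof cases
    case 1
    then show ?thesis using S0 P0 X0 by linarith
  next
    case 2
    then have "{e \<in> opt_set i. remaining st e = 0} \<noteq> {}" by auto
    then have "1 \<le> card {e \<in> opt_set i. remaining st e = 0}"
      using opt_set_props(2)[OF i] by (simp add: Suc_leI card_gt_0_iff)
    then have "opt_val i * 1 \<le> opt_val i * real (card {e \<in> opt_set i. remaining st e = 0})"
      using opt_val_nonneg i by (intro mult_left_mono) auto
    then show ?thesis using S0 P0 by linarith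
  next
    case 3
    then have T: "opt_set i \<in> snd (t i)" "opt_val i \<le> val (t i) (opt_set i)" using opt_set_props(4)[OF i] by auto
    show ?thesis
    proof (cases "sum (price st) (opt_set i) \<le> val (t i) (opt_set i)")
      case True
      then have "val (t i) (opt_set i) \<le> val (t i) (chosen U t i st)"
        using choose_set_spec(3)[OF f T(1) 3(2)] unfolding chosen_def by simp
      then show ?thesis using T P0 X0 by linarith
    next
      case False
      then show ?thesis using T S0 X0 by linarith
    qed
  qed
qed

definition tentative_welfare :: "mpu_state \<Rightarrow> nat set \<Rightarrow> real" where
  "tentative_welfare st P = (\<Sum>i\<in>P. val (t i) (tentative st i))"
definition opt_price :: "mpu_state \<Rightarrow> nat set \<Rightarrow> real" where
  "opt_price st P = (\<Sum>i\<in>P. \<Sum>e\<in>opt_set i. price st e)"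
definition exhausted_charge :: "mpu_state \<Rightarrow> nat set \<Rightarrow> real" where
  "exhausted_charge st P = (\<Sum>i\<in>P. opt_val i * real (card {e \<in> opt_set i. remaining st e = 0}))"

definition charging_invariant :: "nat set \<Rightarrow> mpu_state \<Rightarrow> bool" where
  "charging_invariant P st \<longleftrightarrow> finite P \<and> P \<subseteq> {..<n} \<and> (\<forall>e. 0 \<le> price st e) \<and>
   sum opt_val P \<le> tentative_welfare st P + opt_price st P + exhausted_charge st P \<and>
   (\<Sum>e\<in>U. price st e) \<le> real m * p0 + (r - 1) * tentative_welfare st P"

lemma charge_monotone:
  assumes P: "P \<subseteq> {..<n}" and p: "\<forall>e. 0 \<le> price st e"
  shows "\<forall>e. price st e \<le> price (state_step U r jtop t y i st) e"
    "opt_price st P \<le> opt_price (state_step U r jtop t y i st) P"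
    "exhausted_charge st P \<le> exhausted_charge (state_step U r jtop t y i st) P"
proof -
  have "price st e \<le> r * price st e" for e
    using mult_right_mono[OF r_ge_1, of "price st e"] p by simp
  then show up: "\<forall>e. price st e \<le> price (state_step U r jtop t y i st) e"
    unfolding state_step_sel by simp
  then show "opt_price st P \<le> opt_price (state_step U r jtop t y i st) P"
    unfolding opt_price_def by (intro sum_mono) auto
  have "card {e \<in> opt_set l. remaining st e = 0}
          \<le> card {e \<in> opt_set l. remaining (state_step U r jtop t y i st) e = 0}" if "l \<in> P" for l
  proof (rule card_mono)
    show "finite {e \<in> opt_set l. remaining (state_step U r jtop t y i st) e = 0}"
      using opt_set_props(2) P that by auto
  qed (auto simp: state_step_sel)
  then show "exhausted_charge st P \<le> exhausted_charge (state_step U r jtop t y i st) P"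
    unfolding exhausted_charge_def using opt_val_nonneg P by (intro sum_mono mult_left_mono) auto
qed

lemma total_price_step:
  assumes i: "i < n"
  shows "(\<Sum>e\<in>U. price (state_step U r jtop t y i st) e)
           \<le> (\<Sum>e\<in>U. price st e) + (r - 1) * val (t i) (chosen U t i st)"
proof -
  define S where "S = chosen U t i st"
  have f: "finite (snd (t i))" using finite_demand i .
  have "S \<subseteq> U" using chosen_subset[of t i, OF f] unfolding S_def by blast
  have "(\<Sum>e\<in>U. price (state_step U r jtop t y i st) e)
      = (\<Sum>e\<in>U. price st e + (if e \<in> S then (r - 1) * price st e else 0))"
    unfolding state_step_sel S_def by (intro sum.cong) (auto simp: algebra_simps)
  also have "\<dots> = (\<Sum>e\<in>U. price st e) + (\<Sum>e\<in>U \<inter> S. (r - 1) * price st e)"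
    by (simp add: sum.distrib sum.inter_restrict[OF U(1)])
  also have "(\<Sum>e\<in>U \<inter> S. (r - 1) * price st e) = (r - 1) * sum (price st) S"
    using \<open>S \<subseteq> U\<close> by (simp add: Int_absorb1 sum_distrib_left)
  finally have "(\<Sum>e\<in>U. price (state_step U r jtop t y i st) e)
      = (\<Sum>e\<in>U. price st e) + (r - 1) * sum (price st) S" .
  moreover have "(r - 1) * sum (price st) S \<le> (r - 1) * val (t i) S"
    using choose_set_affordable[OF f] r_ge_1 unfolding S_def chosen_def by (intro mult_left_mono) auto
  ultimately show ?thesis unfolding S_def by linarith
qed

lemma charging_invariant_step:
  assumes i: "i < n" "i \<notin> P" and I: "charging_invariant P st"
  shows "charging_invariant (insert i P) (state_step U r jtop t y i st)"
proof -
  define st' where "st' = state_step U r jtop t y i st"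
  define S where "S = chosen U t i st"
  have fP: "finite P" and P: "P \<subseteq> {..<n}" and p: "\<forall>e. 0 \<le> price st e"
    and inv1: "sum opt_val P \<le> tentative_welfare st P + opt_price st P + exhausted_charge st P"
    and inv2: "(\<Sum>e\<in>U. price st e) \<le> real m * p0 + (r - 1) * tentative_welfare st P"
    using I unfolding charging_invariant_def by auto
  note mono = charge_monotone[OF P p, where y = y and i = i, folded st'_def]
  note mono_i = charge_monotone[OF _ p, where P = "{i}" and y = y and i = i, folded st'_def]
  have p': "\<forall>e. 0 \<le> price st' e" using p mono(1) order_trans by blast
  have "(\<Sum>l\<in>P. val (t l) (((tentative st)(i := S)) l)) = (\<Sum>l\<in>P. val (t l) (tentative st l))"
    using i(2) by (intro sum.cong) auto
  then have tw: "tentative_welfare st' (insert i P) = val (t i) S + tentative_welfare st P"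
    unfolding tentative_welfare_def st'_def state_step_sel S_def[symmetric] using fP i(2) by simp
  have "opt_val i \<le> val (t i) S + opt_price st' {i} + exhausted_charge st' {i}"
    using opt_val_charged[OF i(1) p] mono_i(2,3) i(1)
    unfolding S_def opt_price_def exhausted_charge_def by simp
  then have new1: "sum opt_val (insert i P)
      \<le> tentative_welfare st' (insert i P) + opt_price st' (insert i P) + exhausted_charge st' (insert i P)"
    using inv1 mono(2,3) fP i(2) unfolding tw opt_price_def exhausted_charge_def by simp
  have new2: "(\<Sum>e\<in>U. price st' e) \<le> real m * p0 + (r - 1) * tentative_welfare st' (insert i P)"
    using total_price_step[OF i(1), of y st, folded st'_def S_def] inv2 unfolding tw
    by (simp add: algebra_simps)
  show ?thesis
    unfolding st'_def[symmetric] charging_invariant_def using fP P i(1) p' new1 new2 by auto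
qed

lemma opt_welfare_le_outcome:
  "sum opt_val {..<n} \<le> 2 * tentative_welfare (outcome c) {..<n} + vtop / 2
     + exhausted_charge (outcome c) {..<n}"
proof -
  have "charging_invariant {..<n} (outcome c)"
  proof (rule final_state_invariant[OF n])
    show "charging_invariant {} (initial_state (initial_price U n b eps t) b)"
      unfolding charging_invariant_def tentative_welfare_def opt_price_def exhausted_charge_def
      using p0_pos m_def p0_def by (simp add: initial_state_def)
  qed (use charging_invariant_step in \<open>auto simp: r_def jtop_def\<close>)
  then have I: "sum opt_val {..<n}
      \<le> tentative_welfare (outcome c) {..<n} + opt_price (outcome c) {..<n} + exhausted_charge (outcome c) {..<n}"
    "(\<Sum>e\<in>U. price (outcome c) e) \<le> real m * p0 + (r - 1) * tentative_welfare (outcome c) {..<n}"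
    "\<forall>e. 0 \<le> price (outcome c) e"
    unfolding charging_invariant_def by auto
  have tw: "0 \<le> tentative_welfare (outcome c) {..<n}"
    unfolding tentative_welfare_def using val_nonneg finite_demand by (intro sum_nonneg) auto
  have "opt_price (outcome c) {..<n} \<le> real b * (\<Sum>e\<in>U. price (outcome c) e)"
    unfolding opt_price_def using opt_set_props(1) A_subset A_feasible I(3) U(1)
    by (intro sum_subsets_le_mult_sum) auto
  also have "\<dots> \<le> real b * (real m * p0 + (r - 1) * tentative_welfare (outcome c) {..<n})"
    using I(2) by (intro mult_left_mono) auto
  also have "\<dots> = (1 + eps) * vtop / 4 + (real b * (r - 1)) * tentative_welfare (outcome c) {..<n}"
  proof -
    have "real b * (real m * p0) = (1 + eps) * vtop / 4" unfolding p0_eq using b m_pos by simp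
    then show ?thesis by (simp only: distrib_left mult.assoc)
  qed
  also have "\<dots> \<le> vtop / 2 + 1 * tentative_welfare (outcome c) {..<n}"
    using eps vtop_pos b_mult_r_minus_1_le tw by (intro add_mono mult_right_mono) auto
  finally show ?thesis using I(1) by linarith
qed

lemma card_exhausted_le_exhaustion_bound:
  assumes i: "i < n"
  shows "real (card {e \<in> opt_set i. remaining st e = 0}) \<le> (\<Sum>e\<in>opt_set i. exhaustion_bound e st)"
proof -
  have "real (card {e \<in> opt_set i. remaining st e = 0}) = (\<Sum>e\<in>opt_set i. if remaining st e = 0 then 1 else 0)"
    using sum.inter_filter[OF opt_set_props(2)[OF i], of "\<lambda>_. (1::real)" "\<lambda>e. remaining st e = 0"] by simp
  also have "\<dots> \<le> (\<Sum>e\<in>opt_set i. exhaustion_bound e st)"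
    unfolding exhaustion_bound_def
    using tail_prob_nonneg[OF less_imp_le[OF q_pos] q_le_1]
    by (intro sum_mono) (auto split: nat.split)
  finally show ?thesis .
qed

lemma sum_card_opt_set_inter_S_top_le: "(\<Sum>i<n. real (card (opt_set i \<inter> S_top))) \<le> real b * real d"
proof -
  have "(\<Sum>i<n. real (card (opt_set i \<inter> S_top))) = (\<Sum>i<n. \<Sum>e\<in>opt_set i. if e \<in> S_top then 1 else 0)"
    using opt_set_props(2) sum.inter_restrict[of _ "\<lambda>_. (1::real)" S_top] by (intro sum.cong) auto
  also have "\<dots> \<le> real b * (\<Sum>e\<in>U. if e \<in> S_top then 1 else 0)"
    using opt_set_props(1) A_subset A_feasible U(1) by (intro sum_subsets_le_mult_sum) auto
  also have "(\<Sum>e\<in>U. if e \<in> S_top then (1::real) else 0) = real (card S_top)"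
    using sum.inter_restrict[OF U(1), of "\<lambda>_. (1::real)" S_top] S_top_subset by (simp add: Int_absorb1)
  also have "real b * real (card S_top) \<le> real b * real d" using card_S_top_le by (intro mult_left_mono) auto
  finally show ?thesis .
qed

lemma expectation_exhausted_charge_le:
  "measure_pmf.expectation (coins n b m d)
      (\<lambda>c. \<Sum>i<n. opt_val i * (\<Sum>e\<in>opt_set i. exhaustion_bound e (outcome c)))
     \<le> 3/4 * sum opt_val {..<n} + 9 * droot * vtop"
proof -
  have "measure_pmf.expectation (coins n b m d)
          (\<lambda>c. \<Sum>i<n. opt_val i * (\<Sum>e\<in>opt_set i. exhaustion_bound e (outcome c)))
      = (\<Sum>i<n. opt_val i * (\<Sum>e\<in>opt_set i.
           measure_pmf.expectation (coins n b m d) (\<lambda>c. exhaustion_bound e (outcome c))))"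
    by (simp add: integrable_coins integral_sum integral_mult_right_zero)
  also have "\<dots> \<le> (\<Sum>i<n. opt_val i * (\<Sum>e\<in>opt_set i. beta0 + (if e \<in> S_top then beta1 else 0)))"
    using order_trans[OF expectation_exhaustion_bound_le exhaustion_bound_after_top] opt_val_nonneg
    by (intro sum_mono mult_left_mono) auto
  also have "\<dots> = (\<Sum>i<n. opt_val i * (real (card (opt_set i)) * beta0 + real (card (opt_set i \<inter> S_top)) * beta1))"
  proof (rule sum.cong[OF refl])
    fix i assume "i \<in> {..<n}"
    then have "finite (opt_set i)" using opt_set_props(2) by auto
    then have "(\<Sum>e\<in>opt_set i. if e \<in> S_top then beta1 else 0) = (\<Sum>e\<in>opt_set i \<inter> S_top. beta1)"
      using sum.inter_restrict[of "opt_set i" "\<lambda>_. beta1" S_top] by (simp del: sum_constant)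
    then show "opt_val i * (\<Sum>e\<in>opt_set i. beta0 + (if e \<in> S_top then beta1 else 0))
        = opt_val i * (real (card (opt_set i)) * beta0 + real (card (opt_set i \<inter> S_top)) * beta1)"
      by (simp add: sum.distrib)
  qed
  also have "\<dots> \<le> (\<Sum>i<n. real d * beta0 * opt_val i + vtop * beta1 * real (card (opt_set i \<inter> S_top)))"
  proof (rule sum_mono)
    fix i assume "i \<in> {..<n}"
    then have i: "i < n" by simp
    have "opt_val i * (real (card (opt_set i)) * beta0) \<le> opt_val i * (real d * beta0)"
      using opt_set_props(3)[OF i] opt_val_nonneg[OF i] beta_nonneg
      by (intro mult_left_mono mult_right_mono) auto
    moreover have "opt_val i * (real (card (opt_set i \<inter> S_top)) * beta1)
        \<le> vtop * (real (card (opt_set i \<inter> S_top)) * beta1)"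
      using opt_val_le_vtop[OF i] beta_nonneg by (intro mult_right_mono) auto
    ultimately show "opt_val i * (real (card (opt_set i)) * beta0 + real (card (opt_set i \<inter> S_top)) * beta1)
        \<le> real d * beta0 * opt_val i + vtop * beta1 * real (card (opt_set i \<inter> S_top))"
      by (simp add: algebra_simps)
  qed
  also have "\<dots> = real d * beta0 * sum opt_val {..<n} + vtop * beta1 * (\<Sum>i<n. real (card (opt_set i \<inter> S_top)))"
    by (simp add: sum.distrib sum_distrib_left)
  also have "\<dots> \<le> 3/4 * sum opt_val {..<n} + vtop * beta1 * (real b * real d)"
    using d_mult_beta0_le opt_val_nonneg vtop_pos beta_nonneg sum_card_opt_set_inter_S_top_le
    by (intro add_mono mult_right_mono mult_left_mono sum_nonneg) auto
  also have "vtop * beta1 * (real b * real d) \<le> vtop * (9 * droot)"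
    using mult_left_mono[OF b_d_mult_beta1_le, of vtop] vtop_pos by (simp add: algebra_simps)
  finally show ?thesis by (simp add: algebra_simps)
qed

lemma opt_welfare_le_expectation:
  "sum opt_val {..<n} \<le> 100 * droot * logm * measure_pmf.expectation (coins n b m d) realized_welfare"
proof -
  define OP where "OP = sum opt_val {..<n}"
  define EV where "EV = measure_pmf.expectation (coins n b m d) (\<lambda>c. \<Sum>i<n. val (t i) (tentative (outcome c) i))"
  define EW where "EW = measure_pmf.expectation (coins n b m d) realized_welfare"
  have "OP \<le> measure_pmf.expectation (coins n b m d)
      (\<lambda>c. 2 * tentative_welfare (outcome c) {..<n} + vtop / 2
           + (\<Sum>i<n. opt_val i * (\<Sum>e\<in>opt_set i. exhaustion_bound e (outcome c))))"
  proof (rule order_trans[OF _ integral_mono[OF integrable_coins integrable_coins]])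
    show "OP \<le> measure_pmf.expectation (coins n b m d) (\<lambda>_. OP)" by simp
    fix c
    have "exhausted_charge (outcome c) {..<n}
        \<le> (\<Sum>i<n. opt_val i * (\<Sum>e\<in>opt_set i. exhaustion_bound e (outcome c)))"
      unfolding exhausted_charge_def using card_exhausted_le_exhaustion_bound opt_val_nonneg
      by (intro sum_mono mult_left_mono) auto
    then show "OP \<le> 2 * tentative_welfare (outcome c) {..<n} + vtop / 2
        + (\<Sum>i<n. opt_val i * (\<Sum>e\<in>opt_set i. exhaustion_bound e (outcome c)))"
      using opt_welfare_le_outcome[of c] unfolding OP_def by linarith
  qed
  also have "\<dots> = 2 * EV + vtop / 2 + measure_pmf.expectation (coins n b m d)
      (\<lambda>c. \<Sum>i<n. opt_val i * (\<Sum>e\<in>opt_set i. exhaustion_bound e (outcome c)))"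
    unfolding EV_def tentative_welfare_def
    by (simp add: Bochner_Integration.integral_add integrable_coins integral_mult_right_zero)
  finally have "OP \<le> 8 * EV + 2 * vtop + 36 * droot * vtop"
    using expectation_exhausted_charge_le unfolding OP_def by simp
  then show ?thesis
    using expectation_tentative_welfare_le_log vtop_le_expectation_realized_welfare
      droot_ge_1 logm_ge_2 vtop_pos unfolding OP_def[symmetric] EV_def[symmetric] EW_def[symmetric]
    by (intro three_term_bound) auto
qed

end

lemma approximation_mpu:
  assumes eps: "0 < eps" "eps < 1"
    and U: "finite U" "U \<noteq> {}" and n: "1 \<le> n" and b: "1 \<le> b" and k: "1 \<le> k"
    and valid: "\<forall>i<n. valid_type U k (t i)"
    and demand_card_le: "\<forall>i<n. \<forall>S\<in>snd (t i). 0 < val (t i) S \<longrightarrow> card S \<le> d"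
    and demand_card_eq: "\<exists>i<n. \<exists>S\<in>snd (t i). 0 < val (t i) S \<and> card S = d"
  shows "OPT U n b t \<le> 100 * real d powr (1 / real b) * log 2 (real (4 * b * card U)) *
           measure_pmf.expectation (coins n b (card U) d) (\<lambda>c. welfare n t (mpu_alloc U n b eps t c))"
proof -
  interpret mpu_instance U n b k eps d t using assms by unfold_locales auto
  define \<Omega> where "\<Omega> = {A. A \<in> {..<n} \<rightarrow>\<^sub>E Pow U \<and> feasible U n b A}"
  have "finite \<Omega>" unfolding \<Omega>_def using U(1)
    by (intro finite_subset[OF _ finite_PiE[of "{..<n}" "\<lambda>_. Pow U"]]) auto
  moreover have "restrict (\<lambda>_. {}) {..<n} \<in> \<Omega>" unfolding \<Omega>_def feasible_def by auto
  ultimately have "Max (welfare n t ` \<Omega>) \<in> welfare n t ` \<Omega>" by (intro Max_in) auto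
  then obtain A where A: "A \<in> \<Omega>" "OPT U n b t = welfare n t A" unfolding OPT_def \<Omega>_def[symmetric] by auto
  then interpret mpu_benchmark U n b k eps d t A
    unfolding \<Omega>_def feasible_def by unfold_locales (auto simp: PiE_def Pi_def)
  have "OPT U n b t = sum opt_val {..<n}" unfolding A(2) welfare_def opt_val_def by simp
  also have "\<dots> \<le> 100 * droot * logm * measure_pmf.expectation (coins n b m d) realized_welfare"
    by (rule opt_welfare_le_expectation)
  also have "realized_welfare = (\<lambda>c. welfare n t (mpu_alloc U n b eps t c))"
    unfolding realized_welfare_def welfare_def mpu_alloc_eq_final_state by simp
  finally show ?thesis unfolding droot_def logm_def m_def .
qed

theorem theorem6:
  shows "(\<forall>U n b k eps c. finite U \<and> U \<noteq> {} \<and> 1 \<le> n \<and> 1 \<le> b \<and> 1 \<le> k \<and> 0 < eps \<and> eps < 1 \<longrightarrow>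
            truthful_verif U n k (\<lambda>decl. mpu_alloc U n b eps decl c))
       \<and> (\<forall>U n b k eps c decl. finite U \<and> U \<noteq> {} \<and> 1 \<le> n \<and> 1 \<le> b \<and> 1 \<le> k \<and> 0 < eps \<and> eps < 1 \<and>
            (\<forall>i<n. valid_type U k (decl i)) \<longrightarrow>
            feasible U n b (mpu_alloc U n b eps decl c))
       \<and> (\<forall>eps. 0 < eps \<and> eps < 1 \<longrightarrow>
           (\<exists>C>0. \<forall>U n b k d t. finite U \<and> U \<noteq> {} \<and> 1 \<le> n \<and> 1 \<le> b \<and> 1 \<le> k \<and>
              (\<forall>i<n. valid_type U k (t i)) \<and>
              (\<forall>i<n. \<forall>S\<in>snd (t i). 0 < val (t i) S \<longrightarrow> card S \<le> d) \<and>
              (\<exists>i<n. \<exists>S\<in>snd (t i). 0 < val (t i) S \<and> card S = d) \<longrightarrow>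
              OPT U n b t \<le> C * real d powr (1 / real b) * log 2 (real (4 * b * card U)) *
                measure_pmf.expectation (coins n b (card U) d)
                  (\<lambda>c. welfare n t (mpu_alloc U n b eps t c))))"
proof (intro conjI allI impI exI[of _ 100])
  show "truthful_verif U n k (\<lambda>decl. mpu_alloc U n b eps decl c)"
    if "finite U \<and> U \<noteq> {} \<and> 1 \<le> n \<and> 1 \<le> b \<and> 1 \<le> k \<and> 0 < eps \<and> eps < 1" for U n b k eps c
    using that truthful_mpu by blast
  show "feasible U n b (mpu_alloc U n b eps decl c)"
    if "finite U \<and> U \<noteq> {} \<and> 1 \<le> n \<and> 1 \<le> b \<and> 1 \<le> k \<and> 0 < eps \<and> eps < 1 \<and>
        (\<forall>i<n. valid_type U k (decl i))" for U n b k eps c decl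
    using that feasible_final_state unfolding mpu_alloc_eq_final_state by blast
  show "OPT U n b t \<le> 100 * real d powr (1 / real b) * log 2 (real (4 * b * card U)) *
          measure_pmf.expectation (coins n b (card U) d) (\<lambda>c. welfare n t (mpu_alloc U n b eps t c))"
    if "0 < eps \<and> eps < 1"
      and "finite U \<and> U \<noteq> {} \<and> 1 \<le> n \<and> 1 \<le> b \<and> 1 \<le> k \<and> (\<forall>i<n. valid_type U k (t i)) \<and>
        (\<forall>i<n. \<forall>S\<in>snd (t i). 0 < val (t i) S \<longrightarrow> card S \<le> d) \<and>
        (\<exists>i<n. \<exists>S\<in>snd (t i). 0 < val (t i) S \<and> card S = d)"
    for eps U n b k d t
    using that approximation_mpu[of eps U n b k t d] by blast
qed simp


end
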